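(* Let $\mathcal H_X,\mathcal H_Y$ be finite-dimensional Hilbert spaces, let $\ket{\alpha_0},\ket{\alpha_1}\in\mathcal H_X$ be orthonormal, and let $\rho$ be a state on $\mathcal H_X\otimes\mathcal H_Y$ supported on $\operatorname{span}\{\ket{\alpha_0},\ket{\alpha_1}\}\otimes\mathcal H_Y$. Define the operators on $\mathcal H_Y$ $$A=\bra{\alpha_0}\rho\ket{\alpha_0},\qquad B=\bra{\alpha_0}\rho\ket{\alpha_1},$$ and assume that $A=a\ket\phi\bra\phi$ for some unit vector $\ket\phi\in\mathcal H_Y$ and some $a>0$. Then the following are equivalent: (i) $\rho$ is entangled across $X|Y$; (ii) $\rho$ is NPT across $X|Y$; (iii) $P_{\operatorname{supp}A}\,B\,P_{\operatorname{Ker}A}\neq0$; (iv) $\rho$ is projectively steerable from $X$ to $Y$.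
   Context: $P_{\operatorname{supp}A}$ and $P_{\operatorname{Ker}A}$ are the orthogonal projectors onto the support (range) and kernel of $A$. NPT means the partial transpose with respect to $Y$ (in any fixed basis) is not positive semidefinite. For a bipartite state $\rho$ on $\mathcal H_X\otimes\mathcal H_Y$, the projective assemblage from $X$ to $Y$ consists of $\sigma_{a|M}=\operatorname{tr}_X[(\Pi_a\otimes I_Y)\rho]$ for all projective measurements $M=\{\Pi_a\}$ on $\mathcal H_X$. It admits a local hidden state (LHS) model if there exist a probability space $(\Lambda,\mu)$, density matrices $\tau_\lambda$ on $\mathcal H_Y$ (measurable in $\lambda$) and response functions $p(a|M,\lambda)\ge0$ with $\sum_a p(a|M,\lambda)=1$ such that $\sigma_{a|M}=\int_\Lambda p(a|M,\lambda)\tau_\lambda\,d\mu(\lambda)$ for all $M,a$. The state is projectively steerable from $X$ to $Y$ if no such model exists. *)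

theory Defs
  imports "HOL-Probability.Probability"
begin

text \<open>Finite-dimensional Hilbert spaces are modelled as C^I for a finite index
type I (standard orthonormal basis); operators are matrices I x I.\<close>

type_synonym 'i cvec = "'i \<Rightarrow> complex"
type_synonym 'i cmat = "'i \<Rightarrow> 'i \<Rightarrow> complex"

definition inner_c :: "('i::finite) cvec \<Rightarrow> 'i cvec \<Rightarrow> complex" where
  "inner_c u v = (\<Sum>i\<in>UNIV. cnj (u i) * v i)"

definition mat_apply :: "('i::finite) cmat \<Rightarrow> 'i cvec \<Rightarrow> 'i cvec" where
  "mat_apply M v = (\<lambda>i. \<Sum>j\<in>UNIV. M i j * v j)"

definition mmult :: "('i::finite) cmat \<Rightarrow> 'i cmat \<Rightarrow> 'i cmat" where
  "mmult M N = (\<lambda>i k. \<Sum>j\<in>UNIV. M i j * N j k)"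

definition id_mat :: "'i cmat" where
  "id_mat = (\<lambda>i j. if i = j then 1 else 0)"

definition adjoint :: "'i cmat \<Rightarrow> 'i cmat" where
  "adjoint M = (\<lambda>i j. cnj (M j i))"

definition trace_c :: "('i::finite) cmat \<Rightarrow> complex" where
  "trace_c M = (\<Sum>i\<in>UNIV. M i i)"

definition psd :: "('i::finite) cmat \<Rightarrow> bool" where
  "psd M \<longleftrightarrow> (\<forall>v. Im (inner_c v (mat_apply M v)) = 0 \<and> 0 \<le> Re (inner_c v (mat_apply M v)))"

definition density_op :: "('i::finite) cmat \<Rightarrow> bool" where
  "density_op M \<longleftrightarrow> psd M \<and> trace_c M = 1"

definition kron :: "'x cmat \<Rightarrow> 'y cmat \<Rightarrow> ('x \<times> 'y) cmat" where
  "kron S T = (\<lambda>(i, j) (i', j'). S i i' * T j j')"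

definition separable :: "(('x::finite) \<times> ('y::finite)) cmat \<Rightarrow> bool" where
  "separable \<rho> \<longleftrightarrow> (\<exists>(n::nat) (p::nat \<Rightarrow> real) (S::nat \<Rightarrow> 'x cmat) (T::nat \<Rightarrow> 'y cmat).
      (\<forall>k<n. 0 \<le> p k \<and> density_op (S k) \<and> density_op (T k)) \<and> (\<Sum>k<n. p k) = 1 \<and>
      \<rho> = (\<lambda>u w. \<Sum>k<n. complex_of_real (p k) * kron (S k) (T k) u w))"

definition entangled :: "(('x::finite) \<times> ('y::finite)) cmat \<Rightarrow> bool" where
  "entangled \<rho> \<longleftrightarrow> \<not> separable \<rho>"

definition partial_transpose_Y :: "('x \<times> 'y) cmat \<Rightarrow> ('x \<times> 'y) cmat" where
  "partial_transpose_Y \<rho> = (\<lambda>(i, j) (i', j'). \<rho> (i, j') (i', j))"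

definition NPT :: "(('x::finite) \<times> ('y::finite)) cmat \<Rightarrow> bool" where
  "NPT \<rho> \<longleftrightarrow> \<not> psd (partial_transpose_Y \<rho>)"

definition range_c :: "('i::finite) cmat \<Rightarrow> 'i cvec set" where
  "range_c M = range (mat_apply M)"

definition ker_c :: "('i::finite) cmat \<Rightarrow> 'i cvec set" where
  "ker_c M = {v. mat_apply M v = (\<lambda>_. 0)}"

definition is_orth_proj_onto :: "('i::finite) cmat \<Rightarrow> 'i cvec set \<Rightarrow> bool" where
  "is_orth_proj_onto P V \<longleftrightarrow> adjoint P = P \<and> mmult P P = P \<and> range_c P = V"

definition orth_proj :: "('i::finite) cvec set \<Rightarrow> 'i cmat" where
  "orth_proj V = (THE P. is_orth_proj_onto P V)"

definition is_orth_proj :: "('i::finite) cmat \<Rightarrow> bool" where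
  "is_orth_proj P \<longleftrightarrow> adjoint P = P \<and> mmult P P = P"

definition proj_meas :: "('x::finite) cmat list \<Rightarrow> bool" where
  "proj_meas M \<longleftrightarrow> (\<forall>a<length M. is_orth_proj (M ! a)) \<and>
                   (\<lambda>i j. \<Sum>a<length M. (M ! a) i j) = id_mat"

text \<open>sigma = tr_X[(Proj \<otimes> I) rho].\<close>
definition assemblage :: "(('x::finite) \<times> ('y::finite)) cmat \<Rightarrow> 'x cmat \<Rightarrow> 'y cmat" where
  "assemblage \<rho> Proj = (\<lambda>j j'. \<Sum>i\<in>UNIV. \<Sum>k\<in>UNIV. Proj i k * \<rho> (k, j) (i, j'))"

definition lhs_model :: "'l measure \<Rightarrow> ('l \<Rightarrow> ('y::finite) cmat) \<Rightarrow>
     (('x::finite) cmat list \<Rightarrow> nat \<Rightarrow> 'l \<Rightarrow> real) \<Rightarrow> ('x \<times> 'y) cmat \<Rightarrow> bool" where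
  "lhs_model \<mu> \<tau> p \<rho> \<longleftrightarrow>
     prob_space \<mu> \<and>
     (\<forall>l\<in>space \<mu>. density_op (\<tau> l)) \<and>
     (\<forall>j j'. (\<lambda>l. \<tau> l j j') \<in> borel_measurable \<mu>) \<and>
     (\<forall>M. proj_meas M \<longrightarrow>
        (\<forall>a<length M. (\<lambda>l. p M a l) \<in> borel_measurable \<mu>) \<and>
        (\<forall>l\<in>space \<mu>. (\<forall>a<length M. 0 \<le> p M a l) \<and> (\<Sum>a<length M. p M a l) = 1) \<and>
        (\<forall>a<length M. \<forall>j j'. assemblage \<rho> (M ! a) j j' =
            integral\<^sup>L \<mu> (\<lambda>l. complex_of_real (p M a l) * \<tau> l j j')))"

text \<open>The hidden-variable space is taken, without loss of generality, to be the
canonical one: a hidden variable is a pair (hidden state, response function);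
any LHS model on an arbitrary probability space can be pushed forward to it.\<close>
type_synonym ('x, 'y) hidden = "'y cmat \<times> ('x cmat list \<Rightarrow> nat \<Rightarrow> real)"

definition proj_steerable :: "(('x::finite) \<times> ('y::finite)) cmat \<Rightarrow> bool" where
  "proj_steerable \<rho> \<longleftrightarrow>
     \<not> (\<exists>(\<mu>::('x, 'y) hidden measure) \<tau> p. lhs_model \<mu> \<tau> p \<rho>)"

definition span2_tensor :: "('x::finite) cvec \<Rightarrow> 'x cvec \<Rightarrow> ('x \<times> ('y::finite)) cvec set" where
  "span2_tensor a0 a1 = {w. \<exists>u0 u1 :: 'y cvec. w = (\<lambda>(i, j). a0 i * u0 j + a1 i * u1 j)}"

definition partial_braket :: "('x::finite) cvec \<Rightarrow> ('x \<times> ('y::finite)) cmat \<Rightarrow> 'x cvec \<Rightarrow> 'y cmat" where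
  "partial_braket u \<rho> v = (\<lambda>j j'. \<Sum>i\<in>UNIV. \<Sum>i'\<in>UNIV. cnj (u i) * \<rho> (i, j) (i', j') * v i')"

end

theory Submission
  imports Defs
begin

text \<open>
  Write \<open>\<rho>\<close> in blocks along \<open>\<alpha>0, \<alpha>1\<close>: \<open>A = a |\<phi>\<rangle>\<langle>\<phi>|\<close>, \<open>B = \<langle>\<alpha>0|\<rho>|\<alpha>1\<rangle>\<close>, \<open>C = \<langle>\<alpha>1|\<rho>|\<alpha>1\<rangle>\<close>.
  Positivity of \<open>\<rho>\<close> forces \<open>B\<close> to vanish on \<open>\<phi>\<^sup>\<bottom>\<close> from the left, so \<open>B = |\<phi>\<rangle>\<langle>\<beta>|\<close>, and
  \<open>P\<^sub>s\<^sub>u\<^sub>p\<^sub>p\<^sub>A B P\<^sub>K\<^sub>e\<^sub>r\<^sub>A = |\<phi>\<rangle>\<langle>\<omega>|\<close> with \<open>\<omega>\<close> the component of \<open>\<beta>\<close> orthogonal to \<open>\<phi>\<close>.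

  If \<open>\<omega> = 0\<close>, then \<open>\<beta> = \<gamma> \<phi>\<close> and the Schur-complement bound \<open>C \<ge> |\<gamma>|\<^sup>2/a |\<phi>\<rangle>\<langle>\<phi>|\<close> writes \<open>\<rho>\<close>
  as \<open>a |\<xi>\<rangle>\<langle>\<xi>| \<otimes> |\<phi>\<rangle>\<langle>\<phi>| + |\<alpha>1\<rangle>\<langle>\<alpha>1| \<otimes> C'\<close> with \<open>C' \<ge> 0\<close>: \<open>\<rho>\<close> is separable, hence has an
  LHS model, and its partial transpose is positive by the same bound.

  If \<open>\<omega> \<noteq> 0\<close>, the partial transpose is negative on \<open>\<alpha>0 \<otimes> conj (-s \<omega>) + \<alpha>1 \<otimes> conj \<phi>\<close> for
  large \<open>s\<close>. Measuring the projector onto \<open>\<alpha>0 + e \<alpha>1\<close> steers \<open>Y\<close> into \<open>\<sigma>\<^sub>e\<close> with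
  \<open>\<langle>\<phi>|\<sigma>\<^sub>e|\<omega>\<rangle> \<approx> e |\<omega>|\<^sup>2\<close> but \<open>\<langle>\<omega>|\<sigma>\<^sub>e|\<omega>\<rangle> = O(e\<^sup>2)\<close>. In an LHS model Cauchy-Schwarz bounds
  the former by \<open>\<integral> q\<^sub>e \<surd>\<langle>\<omega>|\<tau>|\<omega>\<rangle>\<close>, and no response function can extract a first order
  signal from \<open>\<surd>f\<close> and only a second order one from \<open>f\<close>. So \<open>\<rho>\<close> is steerable, a fortiori
  entangled.
\<close>

section \<open>Sesquilinear forms, positivity and rank-one operators\<close>

definition sesq :: "('i::finite) cmat \<Rightarrow> 'i cvec \<Rightarrow> 'i cvec \<Rightarrow> complex" where
  "sesq M x y = (\<Sum>i\<in>UNIV. \<Sum>j\<in>UNIV. cnj (x i) * M i j * y j)"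

definition unit_vec :: "'i \<Rightarrow> 'i cvec" where
  "unit_vec c = (\<lambda>i. if i = c then 1 else 0)"

definition cvec_cnj :: "'i cvec \<Rightarrow> 'i cvec" where
  "cvec_cnj v = (\<lambda>i. cnj (v i))"

definition sqnorm :: "('i::finite) cvec \<Rightarrow> real" where
  "sqnorm v = (\<Sum>i\<in>UNIV. (cmod (v i))\<^sup>2)"

definition ketbra :: "'i cvec \<Rightarrow> 'i cvec \<Rightarrow> 'i cmat" where
  "ketbra u v = (\<lambda>i j. u i * cnj (v j))"

definition transpose_c :: "'i cmat \<Rightarrow> 'i cmat" where
  "transpose_c M = (\<lambda>j j'. M j' j)"

lemma sum_UNIV_prod:
  "(\<Sum>u\<in>(UNIV::('a::finite \<times> 'b::finite) set). f u) = (\<Sum>i\<in>UNIV. \<Sum>j\<in>UNIV. f (i, j))"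
  by (simp add: sum.cartesian_product)

lemma sum_reorder4:
  "(\<Sum>j\<in>A. \<Sum>j'\<in>B. \<Sum>i\<in>C. \<Sum>i'\<in>D. F i j i' j') = (\<Sum>i\<in>C. \<Sum>j\<in>A. \<Sum>i'\<in>D. \<Sum>j'\<in>B. F i j i' j')"
proof -
  have "(\<Sum>j\<in>A. \<Sum>j'\<in>B. \<Sum>i\<in>C. \<Sum>i'\<in>D. F i j i' j') = (\<Sum>j\<in>A. \<Sum>i\<in>C. \<Sum>j'\<in>B. \<Sum>i'\<in>D. F i j i' j')"
    by (intro sum.cong refl sum.swap)
  also have "\<dots> = (\<Sum>i\<in>C. \<Sum>j\<in>A. \<Sum>i'\<in>D. \<Sum>j'\<in>B. F i j i' j')"
    by (subst sum.swap) (intro sum.cong refl sum.swap)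
  finally show ?thesis .
qed

lemma inner_c_mat_apply: "inner_c x (mat_apply M y) = sesq M x y"
  by (simp add: inner_c_def mat_apply_def sesq_def sum_distrib_left mult.assoc)

lemma psd_sesqD: "psd M \<Longrightarrow> Im (sesq M v v) = 0 \<and> 0 \<le> Re (sesq M v v)"
  by (simp add: psd_def inner_c_mat_apply)

lemma psd_sesqI: "(\<And>v. Im (sesq M v v) = 0 \<and> 0 \<le> Re (sesq M v v)) \<Longrightarrow> psd M"
  by (simp add: psd_def inner_c_mat_apply)

lemma psd_sesq_real: "psd M \<Longrightarrow> sesq M v v = of_real (Re (sesq M v v))"
  by (drule psd_sesqD[of _ v]) (simp add: complex_eq_iff)

lemma sesq_add_left: "sesq M (\<lambda>i. x i + c * y i) z = sesq M x z + cnj c * sesq M y z"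
  unfolding sesq_def by (simp add: ring_distribs sum.distrib sum_distrib_left mult_ac)

lemma sesq_add_right: "sesq M x (\<lambda>i. y i + c * z i) = sesq M x y + c * sesq M x z"
  unfolding sesq_def by (simp add: ring_distribs sum.distrib sum_distrib_left mult_ac)

lemma sesq_scale_left: "sesq M (\<lambda>i. c * x i) y = cnj c * sesq M x y"
  unfolding sesq_def by (simp add: sum_distrib_left mult_ac)

lemma sesq_scale_right: "sesq M x (\<lambda>i. c * y i) = c * sesq M x y"
  unfolding sesq_def by (simp add: sum_distrib_left mult_ac)

lemma sesq_add_mat: "sesq (\<lambda>u w. M u w + c * N u w) x y = sesq M x y + c * sesq N x y"
  unfolding sesq_def by (simp add: ring_distribs sum.distrib sum_distrib_left mult_ac)

lemma sesq_diff_mat: "sesq (\<lambda>u w. M u w - c * N u w) x y = sesq M x y - c * sesq N x y"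
  unfolding sesq_def by (simp add: ring_distribs sum_subtractf sum_distrib_left mult_ac)

lemma sesq_scale_mat: "sesq (\<lambda>i j. c * M i j) x y = c * sesq M x y"
  unfolding sesq_def by (simp add: sum_distrib_left mult_ac)

lemma sesq_divide_mat: "sesq (\<lambda>j j'. M j j' / c) x y = sesq M x y / c"
  unfolding sesq_def by (simp add: sum_divide_distrib)

lemma sesq_adjoint: "sesq (adjoint M) v u = cnj (sesq M u v)"
  unfolding sesq_def adjoint_def cnj_sum by (subst sum.swap) (simp add: mult_ac)

lemma sesq_transpose: "sesq (transpose_c M) u v = sesq M (cvec_cnj v) (cvec_cnj u)"
  unfolding sesq_def transpose_c_def cvec_cnj_def by (subst sum.swap) (simp add: mult_ac)

lemma sesq_ketbra: "sesq (ketbra u v) x y = cnj (inner_c u x) * inner_c v y"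
  unfolding sesq_def ketbra_def inner_c_def
  by (simp add: sum_distrib_left sum_distrib_right cnj_sum mult_ac, rule sum.swap)

lemma inner_c_commute: "inner_c v u = cnj (inner_c u v)"
  by (simp add: inner_c_def cnj_sum mult.commute)

lemma inner_c_add_left: "inner_c (\<lambda>i. x i + c * y i) z = inner_c x z + cnj c * inner_c y z"
  unfolding inner_c_def by (simp add: ring_distribs sum.distrib sum_distrib_left mult_ac)

lemma inner_c_add_right: "inner_c u (\<lambda>i. x i + c * y i) = inner_c u x + c * inner_c u y"
  unfolding inner_c_def by (simp add: ring_distribs sum.distrib sum_distrib_left mult_ac)

lemma inner_c_scale_left: "inner_c (\<lambda>i. c * x i) y = cnj c * inner_c x y"
  unfolding inner_c_def by (simp add: sum_distrib_left mult_ac)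

lemma inner_c_scale_right: "inner_c u (\<lambda>i. c * x i) = c * inner_c u x"
  unfolding inner_c_def by (simp add: sum_distrib_left mult_ac)

lemma cnj_mult_self: "cnj z * z = of_real ((cmod z)\<^sup>2)"
  by (metis complex_norm_square mult.commute)

lemma inner_c_self: "inner_c v v = of_real (sqnorm v)"
  unfolding inner_c_def sqnorm_def of_real_sum
  by (intro sum.cong refl) (metis complex_norm_square mult.commute of_real_power)

lemma sqnorm_nonneg: "0 \<le> sqnorm v"
  unfolding sqnorm_def by (simp add: sum_nonneg)

lemma sqnorm_pos: "v \<noteq> (\<lambda>_. 0) \<Longrightarrow> 0 < sqnorm v"
proof -
  assume "v \<noteq> (\<lambda>_. 0)"
  then obtain j where "v j \<noteq> 0" by auto
  hence "0 < (cmod (v j))\<^sup>2" by simp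
  also have "(cmod (v j))\<^sup>2 \<le> sqnorm v"
    unfolding sqnorm_def by (rule member_le_sum) auto
  finally show ?thesis .
qed

lemma inner_c_unit_vec: "inner_c (unit_vec c) v = v c"
proof -
  have "inner_c (unit_vec c) v = (\<Sum>j\<in>UNIV. if j = c then v j else 0)"
    unfolding inner_c_def unit_vec_def by (intro sum.cong refl) auto
  thus ?thesis by simp
qed

lemma mat_apply_unit_vec: "mat_apply M (unit_vec c) = (\<lambda>u. M u c)"
proof -
  have "mat_apply M (unit_vec c) = (\<lambda>u. \<Sum>j\<in>UNIV. if j = c then M u j else 0)"
    unfolding mat_apply_def unit_vec_def by (intro ext sum.cong refl) auto
  thus ?thesis by simp
qed

lemma sesq_unit_vec: "sesq M (unit_vec c) (unit_vec d) = M c d"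
  by (simp add: inner_c_mat_apply[symmetric] mat_apply_unit_vec inner_c_unit_vec)

lemma inner_c_unit_vec_right: "inner_c v (unit_vec c) = cnj (v c)"
  by (metis complex_cnj_cnj inner_c_commute inner_c_unit_vec)

lemma sesq_unit_vec_right: "sesq M x (unit_vec d) = inner_c x (\<lambda>i. M i d)"
  by (simp add: inner_c_mat_apply[symmetric] mat_apply_unit_vec)

lemma mmult_ketbra: "mmult (ketbra u v) (ketbra v' w) = (\<lambda>i j. inner_c v v' * ketbra u w i j)"
  unfolding mmult_def ketbra_def inner_c_def by (intro ext) (simp add: sum_distrib_left mult_ac)

lemma ketbra_eq_zero_iff: "ketbra u v = (\<lambda>_ _. 0) \<longleftrightarrow> u = (\<lambda>_. 0) \<or> v = (\<lambda>_. 0)"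
  unfolding ketbra_def by (auto simp: fun_eq_iff)

lemma psd_sesq_commute:
  assumes "psd M" shows "sesq M y x = cnj (sesq M x y)"
proof -
  have expand: "sesq M (\<lambda>i. x i + c * y i) (\<lambda>i. x i + c * y i) =
      sesq M x x + c * sesq M x y + cnj c * sesq M y x + cnj c * c * sesq M y y" for c
    by (simp add: sesq_add_left sesq_add_right ring_distribs mult.assoc)
  have "Im (sesq M x y + sesq M y x) = 0"
    using psd_sesqD[OF assms, of "\<lambda>i. x i + 1 * y i"] psd_sesqD[OF assms, of x]
      psd_sesqD[OF assms, of y] unfolding expand by simp
  moreover have "Re (sesq M x y - sesq M y x) = 0"
    using psd_sesqD[OF assms, of "\<lambda>i. x i + \<i> * y i"] psd_sesqD[OF assms, of x]
      psd_sesqD[OF assms, of y] unfolding expand by simp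
  ultimately show ?thesis by (simp add: complex_eq_iff)
qed

lemma psd_diag: "psd M \<Longrightarrow> 0 \<le> Re (M k k) \<and> Im (M k k) = 0"
  using psd_sesqD[of M "unit_vec k"] by (simp add: sesq_unit_vec)

lemma psd_hermitian: "psd M \<Longrightarrow> M d c = cnj (M c d)"
  using psd_sesq_commute[of M "unit_vec c" "unit_vec d"] by (simp add: sesq_unit_vec)

lemma nonneg_quadratic_imp_le:
  fixes A B Z :: real
  assumes "\<And>t. 0 \<le> A - 2 * t * Z + t\<^sup>2 * Z * B" "0 \<le> Z" "0 \<le> B"
  shows "Z \<le> A * B"
proof (cases "B > 0")
  case True
  have "0 \<le> A - 2 * (1/B) * Z + (1/B)\<^sup>2 * Z * B" by (rule assms(1))
  also have "\<dots> = A - Z / B" using True by (simp add: field_simps power2_eq_square)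
  finally show ?thesis using True by (simp add: field_simps)
next
  case False
  hence B0: "B = 0" using assms by simp
  show ?thesis
  proof (rule ccontr)
    assume "\<not> Z \<le> A * B"
    hence Zp: "Z > 0" using B0 by simp
    have "0 \<le> A - 2 * ((\<bar>A\<bar>+1)/(2*Z)) * Z + ((\<bar>A\<bar>+1)/(2*Z))\<^sup>2 * Z * B" by (rule assms(1))
    also have "\<dots> = A - (\<bar>A\<bar>+1)" using Zp B0 by (simp add: field_simps)
    finally show False by simp
  qed
qed

lemma psd_Cauchy_Schwarz:
  assumes "psd M" shows "(cmod (sesq M x y))\<^sup>2 \<le> Re (sesq M x x) * Re (sesq M y y)"
proof -
  define z where "z = sesq M x y"
  note zz = cnj_mult_self[of z]
  have "0 \<le> Re (sesq M x x) - 2 * t * (cmod z)\<^sup>2 + t\<^sup>2 * (cmod z)\<^sup>2 * Re (sesq M y y)" for t :: real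
  proof -
    define c where "c = - (of_real t * cnj z)"
    have "0 \<le> Re (sesq M (\<lambda>i. x i + c * y i) (\<lambda>i. x i + c * y i))"
      using psd_sesqD[OF assms] by blast
    also have "sesq M (\<lambda>i. x i + c * y i) (\<lambda>i. x i + c * y i) =
        sesq M x x + c * z + cnj c * cnj z + cnj c * c * sesq M y y"
      unfolding sesq_add_left sesq_add_right psd_sesq_commute[OF assms, of y x] z_def
      by (simp add: ring_distribs mult.assoc)
    also have "\<dots> = sesq M x x - 2 * of_real t * (cnj z * z) + of_real (t\<^sup>2) * (cnj z * z) * sesq M y y"
      unfolding c_def by (simp add: algebra_simps power2_eq_square)
    finally show ?thesis
      unfolding zz using psd_sesqD[OF assms, of y] by (simp add: algebra_simps)
  qed
  thus ?thesis
    using nonneg_quadratic_imp_le[of "Re (sesq M x x)" "(cmod z)\<^sup>2" "Re (sesq M y y)"]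
      psd_sesqD[OF assms, of y] unfolding z_def by simp
qed

lemma sesq_partial_braket:
  "sesq (partial_braket u \<rho> v) x y = sesq \<rho> (\<lambda>(i, j). u i * x j) (\<lambda>(i, j). v i * y j)"
proof -
  have "sesq (partial_braket u \<rho> v) x y = (\<Sum>j\<in>UNIV. \<Sum>j'\<in>UNIV. \<Sum>i\<in>UNIV. \<Sum>i'\<in>UNIV.
      cnj (u i * x j) * \<rho> (i, j) (i', j') * (v i' * y j'))"
    unfolding sesq_def partial_braket_def by (simp add: sum_distrib_left sum_distrib_right mult_ac)
  also have "\<dots> = (\<Sum>i\<in>UNIV. \<Sum>j\<in>UNIV. \<Sum>i'\<in>UNIV. \<Sum>j'\<in>UNIV.
      cnj (u i * x j) * \<rho> (i, j) (i', j') * (v i' * y j'))"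
    by (rule sum_reorder4)
  also have "\<dots> = sesq \<rho> (\<lambda>(i, j). u i * x j) (\<lambda>(i, j). v i * y j)"
    unfolding sesq_def sum_UNIV_prod by (simp add: sum_distrib_left sum_distrib_right)
  finally show ?thesis .
qed

lemma psd_partial_braket: "psd \<rho> \<Longrightarrow> psd (partial_braket \<psi> \<rho> \<psi>)"
  by (rule psd_sesqI) (simp add: sesq_partial_braket psd_sesqD)

definition partial_inner :: "('x::finite) cvec \<Rightarrow> ('x \<times> 'y) cvec \<Rightarrow> 'y cvec" where
  "partial_inner \<beta> x = (\<lambda>j. \<Sum>i\<in>UNIV. cnj (\<beta> i) * x (i, j))"

lemma sesq_kron_ketbra:
  fixes x y :: "('x::finite \<times> 'y::finite) cvec"
  shows "sesq (kron (ketbra \<beta> \<gamma>) R) x y = sesq R (partial_inner \<beta> x) (partial_inner \<gamma> y)"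
proof -
  have "sesq R (partial_inner \<beta> x) (partial_inner \<gamma> y) = (\<Sum>j\<in>UNIV. \<Sum>j'\<in>UNIV. \<Sum>i\<in>UNIV. \<Sum>i'\<in>UNIV.
      cnj (x (i, j)) * (\<beta> i * cnj (\<gamma> i') * R j j') * y (i', j'))"
    unfolding sesq_def
  proof (intro sum.cong refl)
    fix j j'
    have "cnj (partial_inner \<beta> x j) * R j j' * partial_inner \<gamma> y j' =
        (\<Sum>i\<in>UNIV. \<Sum>i'\<in>UNIV. (\<beta> i * cnj (x (i, j))) * R j j' * (cnj (\<gamma> i') * y (i', j')))"
      unfolding partial_inner_def cnj_sum
      by (simp add: sum_distrib_left sum_distrib_right, rule sum.swap)
    also have "\<dots> = (\<Sum>i\<in>UNIV. \<Sum>i'\<in>UNIV. cnj (x (i, j)) * (\<beta> i * cnj (\<gamma> i') * R j j') * y (i', j'))"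
      by (intro sum.cong refl) (simp add: mult_ac)
    finally show "cnj (partial_inner \<beta> x j) * R j j' * partial_inner \<gamma> y j' = \<dots>" .
  qed
  also have "\<dots> = (\<Sum>i\<in>UNIV. \<Sum>j\<in>UNIV. \<Sum>i'\<in>UNIV. \<Sum>j'\<in>UNIV.
      cnj (x (i, j)) * (\<beta> i * cnj (\<gamma> i') * R j j') * y (i', j'))"
    by (rule sum_reorder4)
  also have "\<dots> = sesq (kron (ketbra \<beta> \<gamma>) R) x y"
    unfolding sesq_def sum_UNIV_prod kron_def ketbra_def
    by (simp add: sum_distrib_left sum_distrib_right)
  finally show ?thesis by simp
qed

section \<open>Projectors and density operators\<close>

lemma adjoint_mmult: "adjoint (mmult M N) = mmult (adjoint N) (adjoint M)"
  unfolding mmult_def adjoint_def by (simp add: cnj_sum mult.commute)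

lemma mat_apply_mmult: "mat_apply (mmult M N) v = mat_apply M (mat_apply N v)"
  unfolding mmult_def mat_apply_def
  by (rule ext) (simp add: sum_distrib_left sum_distrib_right mult.assoc, rule sum.swap)

lemma mmult_column: "(\<lambda>u. mmult M N u c) = mat_apply M (\<lambda>u. N u c)"
  unfolding mmult_def mat_apply_def by simp

lemma mmult_idem_range:
  assumes "mmult Q Q = Q" "range_c P \<subseteq> range_c Q"
  shows "mmult Q P = P"
proof (intro ext)
  fix i c
  have "mat_apply P (unit_vec c) \<in> range_c Q" using assms(2) unfolding range_c_def by blast
  then obtain y where y: "(\<lambda>u. P u c) = mat_apply Q y"
    unfolding range_c_def mat_apply_unit_vec by blast
  have "(\<lambda>u. mmult Q P u c) = mat_apply (mmult Q Q) y"
    unfolding mmult_column y mat_apply_mmult ..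
  also have "\<dots> = (\<lambda>u. P u c)" unfolding assms(1) y ..
  finally show "mmult Q P i c = P i c" by (rule fun_cong)
qed

lemma orth_proj_eq:
  assumes "is_orth_proj_onto P V" shows "orth_proj V = P"
proof -
  have unique: "Q = P" if "is_orth_proj_onto Q V" for Q
  proof -
    have P: "adjoint P = P" "mmult P P = P" "range_c P = V"
      and Q: "adjoint Q = Q" "mmult Q Q = Q" "range_c Q = V"
      using assms that unfolding is_orth_proj_onto_def by auto
    have "Q = adjoint (mmult P Q)" using mmult_idem_range[of P Q] P Q by simp
    also have "\<dots> = mmult Q P" unfolding adjoint_mmult P Q ..
    also have "\<dots> = P" using mmult_idem_range[of Q P] P Q by simp
    finally show ?thesis .
  qed
  show ?thesis unfolding orth_proj_def using assms unique by (rule the_equality)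
qed

lemma id_mat_sum_left: "(\<Sum>k\<in>UNIV. id_mat i k * (X::'i::finite \<Rightarrow> complex) k) = X i"
proof -
  have "(\<Sum>k\<in>UNIV. id_mat i k * X k) = (\<Sum>k\<in>UNIV. if k = i then X k else 0)"
    unfolding id_mat_def by (intro sum.cong refl) auto
  thus ?thesis by simp
qed

lemma id_mat_sum_right: "(\<Sum>k\<in>UNIV. (X::'i::finite \<Rightarrow> complex) k * id_mat k j) = X j"
proof -
  have "(\<Sum>k\<in>UNIV. X k * id_mat k j) = (\<Sum>k\<in>UNIV. if k = j then X k else 0)"
    unfolding id_mat_def by (intro sum.cong refl) auto
  thus ?thesis by simp
qed

lemma is_orth_proj_complement:
  assumes "is_orth_proj P"
  shows "is_orth_proj (\<lambda>i k. id_mat i k - (P::'i::finite cmat) i k)"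
proof -
  have a: "adjoint P = P" and m: "mmult P P = P" using assms unfolding is_orth_proj_def by auto
  have "adjoint (\<lambda>i k. id_mat i k - P i k) = (\<lambda>i k. id_mat i k - P i k)"
    using a unfolding adjoint_def id_mat_def by (auto simp: fun_eq_iff)
  moreover have "mmult (\<lambda>i k. id_mat i k - P i k) (\<lambda>i k. id_mat i k - P i k) i j = id_mat i j - P i j"
    for i j
  proof -
    have "mmult (\<lambda>i k. id_mat i k - P i k) (\<lambda>i k. id_mat i k - P i k) i j =
      (\<Sum>k\<in>UNIV. id_mat i k * id_mat k j) - (\<Sum>k\<in>UNIV. id_mat i k * P k j)
        - (\<Sum>k\<in>UNIV. P i k * id_mat k j) + mmult P P i j"
      unfolding mmult_def by (simp add: algebra_simps sum_subtractf sum.distrib)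
    thus ?thesis unfolding id_mat_sum_left id_mat_sum_right m by simp
  qed
  ultimately show ?thesis unfolding is_orth_proj_def by auto
qed

lemma proj_meas_complement_pair:
  assumes "is_orth_proj P" shows "proj_meas [P, (\<lambda>i k. id_mat i k - (P::'i::finite cmat) i k)]"
proof -
  have "\<forall>a<2. is_orth_proj ([P, (\<lambda>i k. id_mat i k - P i k)] ! a)"
    using assms is_orth_proj_complement[OF assms] by (auto simp: less_2_cases_iff)
  moreover have "(\<lambda>i j. \<Sum>a<2. ([P, (\<lambda>i k. id_mat i k - P i k)] ! a) i j) = id_mat"
    by (simp add: numeral_2_eq_2)
  ultimately show ?thesis unfolding proj_meas_def by simp
qed

lemma mat_apply_id_minus: "mat_apply (\<lambda>i k. id_mat i k - P i k) v = (\<lambda>i. v i - mat_apply P v i)"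
  unfolding mat_apply_def by (simp add: left_diff_distrib sum_subtractf id_mat_sum_left)

lemma mmult_id_minus: "mmult M (\<lambda>i k. id_mat i k - P i k) = (\<lambda>i k. M i k - mmult M P i k)"
  unfolding mmult_def by (simp add: right_diff_distrib sum_subtractf id_mat_sum_right)

lemma range_c_complement:
  assumes "mmult P P = P" shows "range_c (\<lambda>i k. id_mat i k - P i k) = ker_c P"
proof (intro set_eqI iffI)
  fix w assume "w \<in> range_c (\<lambda>i k. id_mat i k - P i k)"
  then obtain v where "w = (\<lambda>i. v i - mat_apply P v i)" unfolding range_c_def mat_apply_id_minus by auto
  moreover have "mat_apply P (\<lambda>i. v i - mat_apply P v i) =
      (\<lambda>i. mat_apply P v i - mat_apply P (mat_apply P v) i)"
    unfolding mat_apply_def by (simp add: right_diff_distrib sum_subtractf)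
  moreover have "mat_apply P (mat_apply P v) = mat_apply P v"
    using assms mat_apply_mmult[of P P v] by simp
  ultimately show "w \<in> ker_c P" unfolding ker_c_def by simp
next
  fix w assume "w \<in> ker_c P"
  hence "mat_apply (\<lambda>i k. id_mat i k - P i k) w = w" unfolding ker_c_def mat_apply_id_minus by simp
  thus "w \<in> range_c (\<lambda>i k. id_mat i k - P i k)" unfolding range_c_def by (metis rangeI)
qed

lemma mat_apply_scale: "mat_apply (\<lambda>i j. c * M i j) v = mat_apply M (\<lambda>j. c * v j)"
  unfolding mat_apply_def by (simp add: mult_ac sum_distrib_left)

lemma range_c_scale: "c \<noteq> 0 \<Longrightarrow> range_c (\<lambda>i j. c * M i j) = range_c M"
proof -
  assume c: "c \<noteq> 0"
  have "mat_apply M v \<in> range (\<lambda>v. mat_apply M (\<lambda>j. c * v j))" for v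
    using c rangeI[of "\<lambda>v. mat_apply M (\<lambda>j. c * v j)" "\<lambda>j. v j / c"] by simp
  thus ?thesis unfolding range_c_def mat_apply_scale by auto
qed

lemma ker_c_scale: "c \<noteq> 0 \<Longrightarrow> ker_c (\<lambda>i j. c * M i j) = ker_c M"
  unfolding ker_c_def mat_apply_def by (simp add: mult.assoc sum_distrib_left[symmetric] fun_eq_iff)

definition ray_proj :: "('i::finite) cvec \<Rightarrow> 'i cmat" where
  "ray_proj \<psi> = (\<lambda>i k. ketbra \<psi> \<psi> i k / inner_c \<psi> \<psi>)"

lemma ray_proj_unit: "inner_c \<psi> \<psi> = 1 \<Longrightarrow> ray_proj \<psi> = ketbra \<psi> \<psi>"
  by (simp add: ray_proj_def)

lemma is_orth_proj_ray_proj: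
  assumes "\<psi> \<noteq> (\<lambda>_. 0)" shows "is_orth_proj (ray_proj \<psi>)"
proof -
  have nz: "inner_c \<psi> \<psi> \<noteq> 0" using sqnorm_pos[OF assms] by (simp add: inner_c_self)
  have "adjoint (ray_proj \<psi>) = ray_proj \<psi>"
    using inner_c_self[of \<psi>] unfolding adjoint_def ray_proj_def ketbra_def
    by (intro ext) (simp add: mult.commute)
  moreover have "mmult (ray_proj \<psi>) (ray_proj \<psi>) i j = ray_proj \<psi> i j" for i j
  proof -
    have "mmult (ray_proj \<psi>) (ray_proj \<psi>) i j = \<psi> i * cnj (\<psi> j) * inner_c \<psi> \<psi> / (inner_c \<psi> \<psi>)\<^sup>2"
      unfolding mmult_def ray_proj_def ketbra_def inner_c_def
      by (simp add: sum_distrib_left sum_divide_distrib power2_eq_square mult_ac)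
    thus ?thesis using nz unfolding ray_proj_def ketbra_def by (simp add: power2_eq_square)
  qed
  ultimately show ?thesis unfolding is_orth_proj_def by auto
qed

lemma is_orth_proj_ketbra_unit:
  assumes "inner_c \<psi> \<psi> = 1" shows "is_orth_proj (ketbra \<psi> \<psi>)"
proof -
  have "\<psi> \<noteq> (\<lambda>_. 0)" using assms by (auto simp: inner_c_def)
  thus ?thesis using is_orth_proj_ray_proj ray_proj_unit[OF assms] by metis
qed

lemma density_op_diag:
  assumes "density_op T" shows "0 \<le> Re (T j j) \<and> Re (T j j) \<le> 1 \<and> Im (T j j) = 0"
proof -
  have diag: "0 \<le> Re (T k k) \<and> Im (T k k) = 0" for k
    using assms psd_diag unfolding density_op_def by blast
  have "(\<Sum>k\<in>UNIV. Re (T k k)) = 1"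
    using assms unfolding density_op_def trace_c_def by (metis Re_sum one_complex.sel(1))
  moreover have "Re (T j j) \<le> (\<Sum>k\<in>UNIV. Re (T k k))"
    by (rule member_le_sum) (use diag in auto)
  ultimately show ?thesis using diag by simp
qed

lemma density_op_entry_bound:
  assumes "density_op T" shows "cmod (T j j') \<le> 1"
proof -
  have "(cmod (T j j'))\<^sup>2 \<le> Re (T j j) * Re (T j' j')"
    using assms psd_Cauchy_Schwarz[of T "unit_vec j" "unit_vec j'"]
    unfolding density_op_def sesq_unit_vec by simp
  also have "\<dots> \<le> 1 * 1"
    using density_op_diag[OF assms, of j] density_op_diag[OF assms, of j'] by (intro mult_mono) auto
  finally show ?thesis by (simp add: power_le_one_iff)
qed

lemma density_op_sesq_bound:
  assumes "density_op T"
  shows "cmod (sesq T x y) \<le> (\<Sum>i\<in>UNIV. cmod (x i)) * (\<Sum>j\<in>UNIV. cmod (y j))"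
proof -
  have "cmod (sesq T x y) \<le> (\<Sum>i\<in>UNIV. \<Sum>j\<in>UNIV. cmod (cnj (x i) * T i j * y j))"
    unfolding sesq_def by (rule order_trans[OF norm_sum sum_mono[OF norm_sum]])
  also have "\<dots> \<le> (\<Sum>i\<in>UNIV. \<Sum>j\<in>UNIV. cmod (x i) * cmod (y j))"
  proof (intro sum_mono)
    fix i j
    have "cmod (T i j) * cmod (y j) \<le> cmod (y j)"
      using density_op_entry_bound[OF assms] by (simp add: mult_left_le_one_le)
    thus "cmod (cnj (x i) * T i j * y j) \<le> cmod (x i) * cmod (y j)"
      by (simp add: norm_mult mult.assoc mult_left_mono)
  qed
  also have "\<dots> = (\<Sum>i\<in>UNIV. cmod (x i)) * (\<Sum>j\<in>UNIV. cmod (y j))" by (simp add: sum_product)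
  finally show ?thesis .
qed

lemma density_op_sesq_sqrt_bound:
  assumes "density_op T"
  shows "cmod (sesq T x y) \<le> (\<Sum>i\<in>UNIV. cmod (x i)) * sqrt (Re (sesq T y y))"
proof -
  have T: "psd T" using assms by (simp add: density_op_def)
  have "Re (sesq T x x) \<le> cmod (sesq T x x)" by (rule complex_Re_le_cmod)
  also have "\<dots> \<le> (\<Sum>i\<in>UNIV. cmod (x i))\<^sup>2"
    using density_op_sesq_bound[OF assms, of x x] by (simp add: power2_eq_square)
  finally have "(cmod (sesq T x y))\<^sup>2 \<le> (\<Sum>i\<in>UNIV. cmod (x i))\<^sup>2 * Re (sesq T y y)"
    using psd_Cauchy_Schwarz[OF T, of x y] psd_sesqD[OF T, of y] by (meson mult_right_mono order_trans)
  thus ?thesis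
    by (metis real_le_rsqrt real_sqrt_mult real_sqrt_abs abs_of_nonneg sum_nonneg norm_ge_zero)
qed

lemma density_op_ray_proj:
  assumes "\<psi> \<noteq> (\<lambda>_. 0)" shows "density_op (ray_proj \<psi>)"
proof -
  have N: "0 < sqnorm \<psi>" by (rule sqnorm_pos[OF assms])
  have "sesq (ray_proj \<psi>) v v = of_real ((cmod (inner_c \<psi> v))\<^sup>2 / sqnorm \<psi>)" for v
  proof -
    have "sesq (ray_proj \<psi>) v v = cnj (inner_c \<psi> v) * inner_c \<psi> v / inner_c \<psi> \<psi>"
      by (simp only: ray_proj_def sesq_divide_mat sesq_ketbra)
    thus ?thesis unfolding inner_c_self by (metis complex_norm_square mult.commute of_real_divide of_real_power)
  qed
  hence "psd (ray_proj \<psi>)" using N by (intro psd_sesqI) simp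
  moreover have "trace_c (ray_proj \<psi>) = 1"
  proof -
    have "trace_c (ray_proj \<psi>) = (\<Sum>i\<in>UNIV. \<psi> i * cnj (\<psi> i)) / inner_c \<psi> \<psi>"
      unfolding trace_c_def ray_proj_def ketbra_def by (simp add: sum_divide_distrib)
    also have "(\<Sum>i\<in>UNIV. \<psi> i * cnj (\<psi> i)) = inner_c \<psi> \<psi>"
      unfolding inner_c_def by (simp add: mult.commute)
    finally show ?thesis using N by (simp add: inner_c_self)
  qed
  ultimately show ?thesis unfolding density_op_def by simp
qed

lemma density_op_ketbra_unit:
  assumes "inner_c \<psi> \<psi> = 1" shows "density_op (ketbra \<psi> \<psi>)"
proof -
  have "\<psi> \<noteq> (\<lambda>_. 0)" using assms by (auto simp: inner_c_def)
  thus ?thesis using density_op_ray_proj ray_proj_unit[OF assms] by metis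
qed

lemma psd_trace_zero:
  assumes "psd M" "trace_c M = 0" shows "M = (\<lambda>_ _. 0)"
proof (intro ext)
  fix j j'
  note diag = psd_diag[OF assms(1)]
  have "(\<Sum>k\<in>UNIV. Re (M k k)) = 0"
    using assms(2) unfolding trace_c_def by (metis Re_sum zero_complex.sel(1))
  hence "\<forall>k\<in>UNIV. Re (M k k) = 0" using diag by (subst sum_nonneg_eq_0_iff[symmetric]) auto
  hence "(cmod (M j j'))\<^sup>2 \<le> 0"
    using psd_Cauchy_Schwarz[OF assms(1), of "unit_vec j" "unit_vec j'"] unfolding sesq_unit_vec by simp
  thus "M j j' = 0" by simp
qed

lemma density_op_divide_trace:
  assumes "psd M" "trace_c M = of_real t" "t > 0"
  shows "density_op (\<lambda>j j'. M j j' / of_real t)"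
proof -
  have "psd (\<lambda>j j'. M j j' / of_real t)"
    using psd_sesqD[OF assms(1)] assms(3)
    by (intro psd_sesqI) (simp add: sesq_divide_mat Re_divide_of_real Im_divide_of_real)
  moreover have "trace_c (\<lambda>j j'. M j j' / of_real t) = trace_c M / of_real t"
    unfolding trace_c_def by (simp add: sum_divide_distrib)
  ultimately show ?thesis unfolding density_op_def using assms(2,3) by simp
qed

lemma trace_c_diff: "trace_c (\<lambda>u w. M u w - c * N u w) = trace_c M - c * trace_c N"
  unfolding trace_c_def by (simp add: sum_subtractf sum_distrib_left)

lemma trace_c_ketbra: "trace_c (ketbra u v) = inner_c v u"
  unfolding trace_c_def ketbra_def inner_c_def by (simp add: mult.commute)

lemma trace_kron_ketbra: "trace_c (kron (ketbra u v) R) = inner_c v u * trace_c R"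
  unfolding trace_c_def kron_def ketbra_def inner_c_def sum_UNIV_prod
  by (simp add: sum_product mult_ac, rule sum.swap)

lemma psd_eq_scaled_density_op:
  fixes M :: "('i::finite) cmat"
  assumes "psd M"
  obtains T t where "density_op T" "0 \<le> t" "trace_c M = of_real t" "\<And>j j'. M j j' = of_real t * T j j'"
proof -
  define t where "t = Re (trace_c M)"
  note diag = psd_diag[OF assms]
  have t: "trace_c M = of_real t" "0 \<le> t"
    using diag unfolding t_def trace_c_def by (auto simp: complex_eq_iff Im_sum Re_sum sum_nonneg)
  show ?thesis
  proof (cases "t = 0")
    case True
    have "density_op (ray_proj (unit_vec (undefined :: 'i)))"
      by (rule density_op_ray_proj) (auto simp: unit_vec_def fun_eq_iff)
    thus ?thesis using that[of _ 0] psd_trace_zero[OF assms] t True by simp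
  next
    case False
    show ?thesis
      using that[of "\<lambda>j j'. M j j' / of_real t" t] density_op_divide_trace[OF assms t(1)] t False
      by simp
  qed
qed

section \<open>Local hidden state models\<close>

lemma trace_psd_mmult_proj:
  assumes "psd S" "is_orth_proj P"
  shows "trace_c (mmult S P) = of_real (Re (trace_c (mmult S P)))" "0 \<le> Re (trace_c (mmult S P))"
proof -
  have P: "adjoint P = P" "mmult P P = P" using assms(2) unfolding is_orth_proj_def by auto
  have Pc: "cnj (P i m) = P m i" for i m
    using fun_cong[OF fun_cong[OF P(1), of m], of i] unfolding adjoint_def by simp
  have "trace_c (mmult S P) = (\<Sum>i\<in>UNIV. \<Sum>k\<in>UNIV. S i k * mmult P P k i)"
    unfolding P(2) by (simp add: trace_c_def mmult_def)
  also have "\<dots> = (\<Sum>i\<in>UNIV. \<Sum>k\<in>UNIV. \<Sum>m\<in>UNIV. S i k * (P k m * P m i))"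
    unfolding mmult_def by (simp add: sum_distrib_left)
  also have "\<dots> = (\<Sum>m\<in>UNIV. \<Sum>i\<in>UNIV. \<Sum>k\<in>UNIV. S i k * (P k m * P m i))"
    by (subst sum.swap) (intro sum.cong refl sum.swap)
  also have "\<dots> = (\<Sum>m\<in>UNIV. sesq S (\<lambda>k. P k m) (\<lambda>k. P k m))"
    unfolding sesq_def Pc by (simp add: mult_ac)
  finally have tr: "trace_c (mmult S P) = (\<Sum>m\<in>UNIV. sesq S (\<lambda>k. P k m) (\<lambda>k. P k m))" .
  show "trace_c (mmult S P) = of_real (Re (trace_c (mmult S P)))"
    unfolding tr Re_sum of_real_sum by (subst psd_sesq_real[OF assms(1)]) simp
  show "0 \<le> Re (trace_c (mmult S P))"
    unfolding tr Re_sum using psd_sesqD[OF assms(1)] by (simp add: sum_nonneg)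
qed

lemma sum_trace_mmult_proj_meas:
  assumes "proj_meas M"
  shows "(\<Sum>a<length M. trace_c (mmult S (M ! a))) = trace_c (S::'x::finite cmat)"
proof -
  have I: "(\<lambda>i j. \<Sum>a<length M. (M ! a) i j) = id_mat" using assms unfolding proj_meas_def by simp
  have "(\<Sum>a<length M. trace_c (mmult S (M ! a))) =
      (\<Sum>i\<in>UNIV. \<Sum>k\<in>UNIV. S i k * (\<Sum>a<length M. (M ! a) k i))"
    unfolding trace_c_def mmult_def by (simp add: sum_distrib_left sum.swap[of _ "{..<length M}"])
  also have "\<dots> = (\<Sum>i\<in>UNIV. \<Sum>k\<in>UNIV. S i k * id_mat k i)" using fun_cong[OF fun_cong[OF I]] by simp
  also have "\<dots> = trace_c S" unfolding trace_c_def id_mat_sum_right ..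
  finally show ?thesis .
qed

lemma proj_meas_nonempty: "proj_meas (M :: ('x::finite) cmat list) \<Longrightarrow> M \<noteq> []"
proof
  assume "proj_meas M" "M = []"
  hence "(\<lambda>i j. 0) = (id_mat :: 'x cmat)" unfolding proj_meas_def by simp
  from fun_cong[OF fun_cong[OF this], of undefined undefined] show False
    unfolding id_mat_def by simp
qed

lemma assemblage_ray_proj:
  "assemblage \<rho> (ray_proj \<psi>) = (\<lambda>j j'. partial_braket \<psi> \<rho> \<psi> j j' / inner_c \<psi> \<psi>)"
  unfolding assemblage_def ray_proj_def ketbra_def partial_braket_def
  by (intro ext) (simp add: sum_divide_distrib mult_ac, rule sum.swap)

lemma assemblage_mixture:
  "assemblage (\<lambda>u w. \<Sum>k<n. complex_of_real (q k) * kron (S k) (T k) u w) P j j' =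
   (\<Sum>k<n. complex_of_real (q k) * trace_c (mmult (S k) P) * T k j j')"
proof -
  have "assemblage (\<lambda>u w. \<Sum>k<n. complex_of_real (q k) * kron (S k) (T k) u w) P j j' =
     (\<Sum>i\<in>UNIV. \<Sum>m\<in>UNIV. \<Sum>k<n. complex_of_real (q k) * T k j j' * (S k m i * P i m))"
    unfolding assemblage_def kron_def by (simp add: sum_distrib_left mult_ac)
  also have "\<dots> = (\<Sum>k<n. \<Sum>m\<in>UNIV. \<Sum>i\<in>UNIV. complex_of_real (q k) * T k j j' * (S k m i * P i m))"
    by (subst sum.swap, subst (2) sum.swap) (intro sum.cong refl sum.swap)
  also have "\<dots> = (\<Sum>k<n. complex_of_real (q k) * trace_c (mmult (S k) P) * T k j j')"
    unfolding trace_c_def mmult_def by (simp add: sum_distrib_left mult_ac)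
  finally show ?thesis .
qed

lemma pmf_with_weights:
  assumes "\<forall>k<n. 0 \<le> q k" "(\<Sum>k<n. q k) = 1"
  obtains P :: "nat pmf" where "\<And>k. k < n \<Longrightarrow> pmf P k = q k" "set_pmf P \<subseteq> {..<n}"
proof -
  define xs where "xs = map (\<lambda>k. (k, q k)) [0..<n]"
  have filter_xs: "filter (\<lambda>z. fst z = k) xs = (if k < n then [(k, q k)] else [])" for k
    unfolding xs_def by (induction n) auto
  have "sum_list (map snd xs) = (\<Sum>k<n. q k)"
    unfolding xs_def by (simp add: comp_def sum_list_sum_nth atLeast0LessThan)
  hence wf: "pmf_of_list_wf xs"
    using assms unfolding xs_def by (intro pmf_of_list_wfI) auto
  show ?thesis
  proof
    show "pmf (pmf_of_list xs) k = q k" if "k < n" for k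
      using that unfolding pmf_pmf_of_list[OF wf] filter_xs by simp
    show "set_pmf (pmf_of_list xs) \<subseteq> {..<n}"
      using set_pmf_of_list[OF wf] unfolding xs_def by auto
  qed
qed

lemma lhs_model_of_mixture:
  fixes \<rho> :: "(('x::finite) \<times> ('y::finite)) cmat"
    and T :: "nat \<Rightarrow> 'y cmat" and r :: "nat \<Rightarrow> 'x cmat list \<Rightarrow> nat \<Rightarrow> real"
  assumes weights: "\<forall>k<n. 0 \<le> q k" "(\<Sum>k<n. q k) = 1"
    and states: "\<And>k. k < n \<Longrightarrow> density_op (T k)"
    and responses: "\<And>k M. k < n \<Longrightarrow> proj_meas M \<Longrightarrow>
        (\<forall>a<length M. 0 \<le> r k M a) \<and> (\<Sum>a<length M. r k M a) = 1"
    and mixture: "\<And>M a j j'. proj_meas M \<Longrightarrow> a < length M \<Longrightarrow>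
        assemblage \<rho> (M ! a) j j' = (\<Sum>k<n. complex_of_real (q k * r k M a) * T k j j')"
  shows "\<exists>(\<mu>::('x, 'y) hidden measure) \<tau> p. lhs_model \<mu> \<tau> p \<rho>"
proof -
  obtain P where P: "\<And>k. k < n \<Longrightarrow> pmf P k = q k" "set_pmf P \<subseteq> {..<n}"
    using pmf_with_weights[OF weights] by blast
  have n: "0 < n" using weights(2) by (cases n) auto
  define valid where "valid = (\<lambda>(f::'x cmat list \<Rightarrow> nat \<Rightarrow> real) M.
      (\<forall>a<length M. 0 \<le> f M a) \<and> (\<Sum>a<length M. f M a) = 1)"
  define h :: "nat \<Rightarrow> ('x, 'y) hidden" where "h = (\<lambda>k. (T k, r k))"
  define \<mu> where "\<mu> = measure_pmf (map_pmf h P)"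
  \<comment> \<open>Outside the support of \<open>\<mu>\<close> the hidden state and response are replaced by admissible defaults.\<close>
  define \<tau> :: "('x, 'y) hidden \<Rightarrow> 'y cmat" where "\<tau> = (\<lambda>l. if density_op (fst l) then fst l else T 0)"
  define p :: "'x cmat list \<Rightarrow> nat \<Rightarrow> ('x, 'y) hidden \<Rightarrow> real"
    where "p = (\<lambda>M a l. if valid (snd l) M then snd l M a else (if a = 0 then 1 else 0))"
  have p_dist: "(\<forall>a<length M. 0 \<le> p M a l) \<and> (\<Sum>a<length M. p M a l) = 1" if "proj_meas M" for M l
  proof (cases "valid (snd l) M")
    case False
    have "(\<Sum>a<length M. if a = 0 then 1 else 0) = (1::real)"
      using proj_meas_nonempty[OF that] by simp
    thus ?thesis using False unfolding p_def by simp
  qed (simp add: p_def valid_def)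
  have assemblage_integral: "assemblage \<rho> (M ! a) j j' = integral\<^sup>L \<mu> (\<lambda>l. complex_of_real (p M a l) * \<tau> l j j')"
    if M: "proj_meas M" "a < length M" for M a j j'
  proof -
    have "integral\<^sup>L \<mu> (\<lambda>l. complex_of_real (p M a l) * \<tau> l j j') =
        (\<Sum>k<n. pmf P k *\<^sub>R (complex_of_real (p M a (h k)) * \<tau> (h k) j j'))"
      unfolding \<mu>_def integral_map_pmf by (rule integral_measure_pmf) (use P(2) in auto)
    also have "\<dots> = (\<Sum>k<n. complex_of_real (q k * r k M a) * T k j j')"
      using P(1) states responses[OF _ M(1)] unfolding p_def \<tau>_def h_def valid_def
      by (intro sum.cong refl) (simp add: scaleR_conv_of_real)
    finally show ?thesis using mixture[OF M] by simp
  qed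
  have "prob_space \<mu>" "\<And>f :: _ \<Rightarrow> real. f \<in> borel_measurable \<mu>"
    "\<And>f :: _ \<Rightarrow> complex. f \<in> borel_measurable \<mu>"
    by (simp_all add: \<mu>_def prob_space_measure_pmf)
  hence "lhs_model \<mu> \<tau> p \<rho>"
    unfolding lhs_model_def using p_dist assemblage_integral states[OF n] by (auto simp: \<tau>_def)
  thus ?thesis by blast
qed

lemma separable_imp_lhs_model:
  fixes \<rho> :: "(('x::finite) \<times> ('y::finite)) cmat"
  assumes "separable \<rho>"
  shows "\<exists>(\<mu>::('x, 'y) hidden measure) \<tau> p. lhs_model \<mu> \<tau> p \<rho>"
proof -
  obtain n q and S :: "nat \<Rightarrow> 'x cmat" and T :: "nat \<Rightarrow> 'y cmat"
    where H: "\<forall>k<n. 0 \<le> q k \<and> density_op (S k) \<and> density_op (T k)" "(\<Sum>k<n. q k) = 1"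
      and \<rho>: "\<rho> = (\<lambda>u w. \<Sum>k<n. complex_of_real (q k) * kron (S k) (T k) u w)"
    using assms unfolding separable_def by blast
  define r where "r = (\<lambda>k (M::'x cmat list) a. Re (trace_c (mmult (S k) (M ! a))))"
  \<comment> \<open>Born rule: the \<open>X\<close>-factor \<open>S k\<close> of each product term supplies the response function\<close>
  have born: "trace_c (mmult (S k) (M ! a)) = of_real (r k M a)" "0 \<le> r k M a"
    if "k < n" "proj_meas M" "a < length M" for k M a
    using trace_psd_mmult_proj[of "S k" "M ! a"] H(1) that
    unfolding r_def density_op_def proj_meas_def by auto
  show ?thesis
  proof (rule lhs_model_of_mixture[of n q T r])
    show "(\<forall>a<length M. 0 \<le> r k M a) \<and> (\<Sum>a<length M. r k M a) = 1"
      if "k < n" "proj_meas M" for k M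
      using born[OF that] sum_trace_mmult_proj_meas[OF that(2), of "S k"] H(1) that(1)
      unfolding r_def density_op_def by (simp flip: Re_sum)
    show "assemblage \<rho> (M ! a) j j' = (\<Sum>k<n. complex_of_real (q k * r k M a) * T k j j')"
      if "proj_meas M" "a < length M" for M a j j'
      unfolding \<rho> assemblage_mixture using born that by (intro sum.cong refl) simp
  qed (use H in auto)
qed

lemma lhs_modelD:
  assumes "lhs_model \<mu> \<tau> p \<rho>" "proj_meas M" "a < length M"
  shows "prob_space \<mu>" "\<And>l. l \<in> space \<mu> \<Longrightarrow> density_op (\<tau> l)"
    "\<And>j j'. (\<lambda>l. \<tau> l j j') \<in> borel_measurable \<mu>"
    "(\<lambda>l. p M a l) \<in> borel_measurable \<mu>"
    "\<And>l. l \<in> space \<mu> \<Longrightarrow> 0 \<le> p M a l \<and> p M a l \<le> 1"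
    "\<And>j j'. assemblage \<rho> (M ! a) j j' = integral\<^sup>L \<mu> (\<lambda>l. complex_of_real (p M a l) * \<tau> l j j')"
proof -
  note L = assms(1)[unfolded lhs_model_def]
  show "prob_space \<mu>" "\<And>l. l \<in> space \<mu> \<Longrightarrow> density_op (\<tau> l)"
    "\<And>j j'. (\<lambda>l. \<tau> l j j') \<in> borel_measurable \<mu>" "(\<lambda>l. p M a l) \<in> borel_measurable \<mu>"
    "\<And>j j'. assemblage \<rho> (M ! a) j j' = integral\<^sup>L \<mu> (\<lambda>l. complex_of_real (p M a l) * \<tau> l j j')"
    using L assms(2,3) by auto
  fix l assume l: "l \<in> space \<mu>"
  have nn: "\<forall>b<length M. 0 \<le> p M b l" and one: "(\<Sum>b<length M. p M b l) = 1"
    using L assms(2) l by auto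
  have "p M a l \<le> (\<Sum>b<length M. p M b l)" by (rule member_le_sum) (use nn assms(3) in auto)
  thus "0 \<le> p M a l \<and> p M a l \<le> 1" using nn assms(3) one by auto
qed

lemma lhs_sesq_integral:
  assumes "lhs_model \<mu> \<tau> p \<rho>" "proj_meas M" "a < length M"
  shows "integrable \<mu> (\<lambda>l. complex_of_real (p M a l) * sesq (\<tau> l) x y)"
    "sesq (assemblage \<rho> (M ! a)) x y = integral\<^sup>L \<mu> (\<lambda>l. complex_of_real (p M a l) * sesq (\<tau> l) x y)"
proof -
  note L = lhs_modelD[OF assms]
  interpret prob_space \<mu> by (rule L(1))
  define G where "G = (\<lambda>j j' l. cnj (x j) * (complex_of_real (p M a l) * \<tau> l j j') * y j')"
  have "integrable \<mu> (\<lambda>l. complex_of_real (p M a l) * \<tau> l j j')" for j j'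
  proof (rule integrable_const_bound)
    show "AE l in \<mu>. norm (complex_of_real (p M a l) * \<tau> l j j') \<le> 1"
      using L(5) density_op_entry_bound[OF L(2)] by (intro AE_I2) (simp add: norm_mult mult_le_one)
    show "(\<lambda>l. complex_of_real (p M a l) * \<tau> l j j') \<in> borel_measurable \<mu>"
      using L(3,4) by measurable
  qed
  hence G: "integrable \<mu> (G j j')" for j j' unfolding G_def by auto
  have eq: "complex_of_real (p M a l) * sesq (\<tau> l) x y = (\<Sum>j\<in>UNIV. \<Sum>j'\<in>UNIV. G j j' l)" for l
    unfolding sesq_def G_def by (simp add: sum_distrib_left mult_ac)
  show "integrable \<mu> (\<lambda>l. complex_of_real (p M a l) * sesq (\<tau> l) x y)"
    unfolding eq using G by (intro Bochner_Integration.integrable_sum)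
  have "sesq (assemblage \<rho> (M ! a)) x y = (\<Sum>j\<in>UNIV. \<Sum>j'\<in>UNIV. integral\<^sup>L \<mu> (G j j'))"
    unfolding sesq_def L(6) G_def by simp
  also have "\<dots> = integral\<^sup>L \<mu> (\<lambda>l. \<Sum>j\<in>UNIV. \<Sum>j'\<in>UNIV. G j j' l)"
    using G by (simp add: Bochner_Integration.integral_sum Bochner_Integration.integrable_sum)
  finally show "sesq (assemblage \<rho> (M ! a)) x y =
      integral\<^sup>L \<mu> (\<lambda>l. complex_of_real (p M a l) * sesq (\<tau> l) x y)"
    unfolding eq .
qed

lemma lhs_sesq_measurable:
  "lhs_model \<mu> \<tau> p \<rho> \<Longrightarrow> (\<lambda>l. Re (sesq (\<tau> l) y y)) \<in> borel_measurable \<mu>"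
  unfolding lhs_model_def sesq_def by measurable auto

lemma lhs_integrable_sqrt:
  assumes "lhs_model \<mu> \<tau> p \<rho>" "proj_meas M" "a < length M"
  shows "integrable \<mu> (\<lambda>l. p M a l * sqrt (Re (sesq (\<tau> l) y y)))"
proof -
  note L = lhs_modelD[OF assms]
  interpret prob_space \<mu> by (rule L(1))
  define S where "S = (\<Sum>j\<in>UNIV. cmod (y j))"
  have "AE l in \<mu>. norm (p M a l * sqrt (Re (sesq (\<tau> l) y y))) \<le> S"
  proof (rule AE_I2)
    fix l assume l: "l \<in> space \<mu>"
    have "Re (sesq (\<tau> l) y y) \<le> S\<^sup>2"
      using complex_Re_le_cmod[of "sesq (\<tau> l) y y"] density_op_sesq_bound[OF L(2)[OF l], of y y]
      unfolding S_def power2_eq_square by linarith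
    hence "sqrt (Re (sesq (\<tau> l) y y)) \<le> S"
      using S_def by (simp add: real_sqrt_le_iff sum_nonneg real_le_lsqrt)
    moreover have "0 \<le> Re (sesq (\<tau> l) y y)"
      using L(2)[OF l] psd_sesqD unfolding density_op_def by blast
    ultimately show "norm (p M a l * sqrt (Re (sesq (\<tau> l) y y))) \<le> S"
      using L(5)[OF l] by (simp add: abs_mult) (meson mult_left_le_one_le order_trans real_sqrt_ge_zero)
  qed
  moreover have "(\<lambda>l. p M a l * sqrt (Re (sesq (\<tau> l) y y))) \<in> borel_measurable \<mu>"
    using L(4) lhs_sesq_measurable[OF assms(1)] by measurable
  ultimately show ?thesis by (rule integrable_const_bound)
qed

lemma lhs_integral_Re_sesq:
  assumes "lhs_model \<mu> \<tau> p \<rho>" "proj_meas M" "a < length M"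
  shows "integrable \<mu> (\<lambda>l. p M a l * Re (sesq (\<tau> l) y y))"
    "integral\<^sup>L \<mu> (\<lambda>l. p M a l * Re (sesq (\<tau> l) y y)) = Re (sesq (assemblage \<rho> (M ! a)) y y)"
proof -
  note I = lhs_sesq_integral[OF assms, of y y]
  have eq: "(\<lambda>l. p M a l * Re (sesq (\<tau> l) y y)) = (\<lambda>l. Re (complex_of_real (p M a l) * sesq (\<tau> l) y y))"
    by simp
  show "integrable \<mu> (\<lambda>l. p M a l * Re (sesq (\<tau> l) y y))"
    unfolding eq using I(1) by (rule integrable_Re)
  show "integral\<^sup>L \<mu> (\<lambda>l. p M a l * Re (sesq (\<tau> l) y y)) = Re (sesq (assemblage \<rho> (M ! a)) y y)"
    unfolding eq I(2) by (rule integral_Re[OF I(1)])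
qed

lemma lhs_sesq_le_integral_sqrt:
  assumes "lhs_model \<mu> \<tau> p \<rho>" "proj_meas M" "a < length M"
  shows "cmod (sesq (assemblage \<rho> (M ! a)) x y) \<le>
    (\<Sum>i\<in>UNIV. cmod (x i)) * integral\<^sup>L \<mu> (\<lambda>l. p M a l * sqrt (Re (sesq (\<tau> l) y y)))"
proof -
  note L = lhs_modelD[OF assms] and I = lhs_sesq_integral[OF assms, of x y]
  interpret prob_space \<mu> by (rule L(1))
  have "cmod (sesq (assemblage \<rho> (M ! a)) x y) \<le> integral\<^sup>L \<mu> (\<lambda>l. cmod (complex_of_real (p M a l) * sesq (\<tau> l) x y))"
    unfolding I(2) by (rule integral_norm_bound)
  also have "\<dots> \<le> integral\<^sup>L \<mu> (\<lambda>l. (\<Sum>i\<in>UNIV. cmod (x i)) * (p M a l * sqrt (Re (sesq (\<tau> l) y y))))"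
  proof (rule integral_mono)
    show "integrable \<mu> (\<lambda>l. cmod (complex_of_real (p M a l) * sesq (\<tau> l) x y))"
      using I(1) by (rule integrable_norm)
    show "integrable \<mu> (\<lambda>l. (\<Sum>i\<in>UNIV. cmod (x i)) * (p M a l * sqrt (Re (sesq (\<tau> l) y y))))"
      using lhs_integrable_sqrt[OF assms] by (rule integrable_mult_right)
    fix l assume l: "l \<in> space \<mu>"
    show "cmod (complex_of_real (p M a l) * sesq (\<tau> l) x y) \<le>
        (\<Sum>i\<in>UNIV. cmod (x i)) * (p M a l * sqrt (Re (sesq (\<tau> l) y y)))"
      using L(5)[OF l] density_op_sesq_sqrt_bound[OF L(2)[OF l], of x y]
      by (simp add: norm_mult mult.left_commute mult_left_mono)
  qed
  finally show ?thesis by simp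
qed

section \<open>An obstruction to local hidden state models\<close>

lemma measure_small_positive_tendsto_0:
  assumes "finite_measure \<mu>" "f \<in> borel_measurable \<mu>"
  shows "(\<lambda>n. measure \<mu> {l \<in> space \<mu>. 0 < f l \<and> f l < (d / Suc n)\<^sup>2}) \<longlonglongrightarrow> 0"
proof -
  interpret finite_measure \<mu> by (rule assms(1))
  define E where "E = (\<lambda>n::nat. {l \<in> space \<mu>. 0 < f l \<and> f l < (d / Suc n)\<^sup>2})"
  have "(\<lambda>n. measure \<mu> (E n)) \<longlonglongrightarrow> measure \<mu> (\<Inter> (range E))"
  proof (rule finite_Lim_measure_decseq)
    show "range E \<subseteq> sets \<mu>" unfolding E_def using assms(2) by auto
    have "(d / Suc n)\<^sup>2 \<le> (d / Suc m)\<^sup>2" if "m \<le> n" for m n :: nat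
      using that by (simp add: power_divide frac_le)
    thus "decseq E" unfolding E_def by (force intro!: antimonoI)
  qed
  moreover have "\<Inter> (range E) = {}"
  proof (rule ccontr)
    assume "\<Inter> (range E) \<noteq> {}"
    then obtain l where l: "\<And>n. l \<in> E n" by blast
    have "(\<lambda>n. (d / Suc n)\<^sup>2) \<longlonglongrightarrow> (0::real)"
      using tendsto_power[OF LIMSEQ_Suc[OF lim_const_over_n[of d]], of 2] by simp
    hence "f l \<le> 0"
      by (rule LIMSEQ_le_const) (use l in \<open>auto simp: E_def intro: less_imp_le\<close>)
    thus False using l[of 0] unfolding E_def by simp
  qed
  ultimately show ?thesis unfolding E_def by simp
qed

lemma integral_sqrt_le_small_part:
  assumes "prob_space \<mu>" "f \<in> borel_measurable \<mu>" "\<And>l. l \<in> space \<mu> \<Longrightarrow> 0 \<le> f l"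
    and "\<And>l. l \<in> space \<mu> \<Longrightarrow> 0 \<le> q l \<and> q l \<le> 1"
    and "integrable \<mu> (\<lambda>l. q l * sqrt (f l))" "integrable \<mu> (\<lambda>l. q l * f l)" "\<eta> > 0"
  shows "integral\<^sup>L \<mu> (\<lambda>l. q l * sqrt (f l)) \<le>
    \<eta> * measure \<mu> {l \<in> space \<mu>. 0 < f l \<and> f l < \<eta>\<^sup>2} + integral\<^sup>L \<mu> (\<lambda>l. q l * f l) / \<eta>"
proof -
  interpret prob_space \<mu> by (rule assms(1))
  define E where "E = {l \<in> space \<mu>. 0 < f l \<and> f l < \<eta>\<^sup>2}"
  have E: "E \<in> sets \<mu>" unfolding E_def using assms(2) by measurable
  \<comment> \<open>pointwise: \<open>\<surd>f \<le> \<eta>\<close> on \<open>E\<close>, and \<open>\<surd>f \<le> f / \<eta>\<close> where \<open>f \<ge> \<eta>\<^sup>2\<close>\<close>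
  have "q l * sqrt (f l) \<le> \<eta> * indicator E l + q l * f l / \<eta>" if l: "l \<in> space \<mu>" for l
  proof -
    have q: "0 \<le> q l" "q l \<le> 1" and f: "0 \<le> f l" using assms(3,4)[OF l] by auto
    consider "f l = 0" | "0 < f l" "f l < \<eta>\<^sup>2" | "\<eta>\<^sup>2 \<le> f l" using f by linarith
    thus ?thesis
    proof cases
      case 2
      hence "q l * sqrt (f l) \<le> \<eta>"
        using q assms(7) by (metis real_sqrt_less_iff real_sqrt_abs abs_of_pos less_imp_le
            mult_left_le_one_le real_sqrt_ge_zero order_trans)
      moreover have "0 \<le> q l * f l / \<eta>" using q f assms(7) by simp
      ultimately show ?thesis using 2 l unfolding E_def by simp
    next
      case 3
      hence "\<eta> \<le> sqrt (f l)" using assms(7) by (simp add: real_le_rsqrt)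
      hence "sqrt (f l) * \<eta> \<le> sqrt (f l) * sqrt (f l)" using f by (intro mult_left_mono) auto
      hence "sqrt (f l) * \<eta> \<le> f l" using f by simp
      hence "q l * (sqrt (f l) * \<eta>) \<le> q l * f l" using q by (intro mult_left_mono) auto
      hence "q l * sqrt (f l) \<le> q l * f l / \<eta>" using assms(7) by (simp add: field_simps)
      moreover have "0 \<le> \<eta> * indicator E l" using assms(7) by simp
      ultimately show ?thesis by linarith
    qed (use q assms(7) in simp)
  qed
  hence "integral\<^sup>L \<mu> (\<lambda>l. q l * sqrt (f l)) \<le> integral\<^sup>L \<mu> (\<lambda>l. \<eta> * indicator E l + q l * f l / \<eta>)"
    using assms(5,6) E by (intro integral_mono) (auto simp: emeasure_eq_measure)
  also have "\<dots> = \<eta> * measure \<mu> E + integral\<^sup>L \<mu> (\<lambda>l. q l * f l) / \<eta>"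
    using assms(6) E by (simp add: Bochner_Integration.integral_add emeasure_eq_measure)
  finally show ?thesis unfolding E_def .
qed

text \<open>A family of response functions \<open>q e\<close> cannot extract a signal of first order in \<open>e\<close>
  from \<open>\<surd>f\<close> while extracting only a second order one from \<open>f\<close>: it would have to concentrate
  on the sets \<open>0 < f < (t e)\<^sup>2\<close>, whose measures tend to \<open>0\<close>.\<close>

lemma no_linear_sqrt_moment_with_quadratic_moment:
  fixes f :: "'l \<Rightarrow> real" and q :: "real \<Rightarrow> 'l \<Rightarrow> real"
  assumes \<mu>: "prob_space \<mu>" and f: "f \<in> borel_measurable \<mu>" "\<And>l. l \<in> space \<mu> \<Longrightarrow> 0 \<le> f l"
    and q: "\<And>e l. 0 < e \<Longrightarrow> e \<le> \<delta> \<Longrightarrow> l \<in> space \<mu> \<Longrightarrow> 0 \<le> q e l \<and> q e l \<le> 1"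
    and integrable: "\<And>e. 0 < e \<Longrightarrow> e \<le> \<delta> \<Longrightarrow> integrable \<mu> (\<lambda>l. q e l * sqrt (f l))"
      "\<And>e. 0 < e \<Longrightarrow> e \<le> \<delta> \<Longrightarrow> integrable \<mu> (\<lambda>l. q e l * f l)"
    and lower: "\<And>e. 0 < e \<Longrightarrow> e \<le> \<delta> \<Longrightarrow> a * e \<le> integral\<^sup>L \<mu> (\<lambda>l. q e l * sqrt (f l))"
    and upper: "\<And>e. 0 < e \<Longrightarrow> e \<le> \<delta> \<Longrightarrow> integral\<^sup>L \<mu> (\<lambda>l. q e l * f l) \<le> b * e\<^sup>2"
    and ab: "0 < a" "0 \<le> b" and \<delta>: "0 < \<delta>"
  shows False
proof -
  define t where "t = 2 * b / a + 1"
  have t: "0 < t" "b / t \<le> a / 2"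
    using ab unfolding t_def by (auto simp: field_simps add_nonneg_pos)
  define E where "E = (\<lambda>\<eta>. measure \<mu> {l \<in> space \<mu>. 0 < f l \<and> f l < \<eta>\<^sup>2})"
  have E_lower: "a / (2 * t) \<le> E (t * e)" if e: "0 < e" "e \<le> \<delta>" for e
  proof -
    have "integral\<^sup>L \<mu> (\<lambda>l. q e l * f l) / (t * e) \<le> b * e\<^sup>2 / (t * e)"
      using upper[OF e] e t by (intro divide_right_mono) auto
    hence "a * e \<le> t * e * E (t * e) + b * e\<^sup>2 / (t * e)"
      using lower[OF e] integral_sqrt_le_small_part[OF \<mu> f q[OF e] integrable(1,2)[OF e], of "t * e"]
        e t unfolding E_def by simp
    also have "\<dots> = (t * E (t * e) + b / t) * e"
      using e t by (simp add: field_simps power2_eq_square)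
    finally have "a \<le> t * E (t * e) + b / t" using e by simp
    hence "a / 2 \<le> t * E (t * e)" using t by linarith
    thus ?thesis using t by (simp add: field_simps)
  qed
  have "(\<lambda>n. E (t * \<delta> / Suc n)) \<longlonglongrightarrow> 0"
    unfolding E_def using \<mu> f(1) by (intro measure_small_positive_tendsto_0) (simp add: prob_space_def)
  moreover have "a / (2 * t) \<le> E (t * \<delta> / Suc n)" for n
    using E_lower[of "\<delta> / Suc n"] \<delta> by (simp add: divide_le_eq)
  ultimately have "a / (2 * t) \<le> 0" by (intro LIMSEQ_le_const) auto
  thus False using ab t by (simp add: field_simps)
qed

section \<open>States on a qubit subspace with a rank-one corner\<close>

locale rank_one_corner =
  fixes \<rho> :: "(('x::finite) \<times> ('y::finite)) cmat"
    and \<alpha>0 \<alpha>1 :: "'x cvec" and \<phi> :: "'y cvec" and a :: real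
  assumes orthonormal: "inner_c \<alpha>0 \<alpha>0 = 1" "inner_c \<alpha>1 \<alpha>1 = 1" "inner_c \<alpha>0 \<alpha>1 = 0"
    and state: "density_op \<rho>"
    and support: "range_c \<rho> \<subseteq> span2_tensor \<alpha>0 \<alpha>1"
    and unit_phi: "inner_c \<phi> \<phi> = 1"
    and a_pos: "a > 0"
    and A_rank1: "partial_braket \<alpha>0 \<rho> \<alpha>0 = (\<lambda>j j'. complex_of_real a * \<phi> j * cnj (\<phi> j'))"
begin

abbreviation "A \<equiv> partial_braket \<alpha>0 \<rho> \<alpha>0"
abbreviation "B \<equiv> partial_braket \<alpha>0 \<rho> \<alpha>1"
abbreviation "C \<equiv> partial_braket \<alpha>1 \<rho> \<alpha>1"

definition lift :: "'y cvec \<Rightarrow> 'y cvec \<Rightarrow> ('x \<times> 'y) cvec" where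
  "lift u v = (\<lambda>(i, j). \<alpha>0 i * u j + \<alpha>1 i * v j)"

lemma inner_alpha1_alpha0: "inner_c \<alpha>1 \<alpha>0 = 0"
  using orthonormal(3) inner_c_commute[of \<alpha>1 \<alpha>0] by simp

lemma rho_psd: "psd \<rho>"
  using state by (simp add: density_op_def)

lemma partial_inner_lift: "partial_inner \<alpha>0 (lift u v) = u" "partial_inner \<alpha>1 (lift u v) = v"
proof -
  have "partial_inner \<eta> (lift u v) = (\<lambda>j. inner_c \<eta> \<alpha>0 * u j + inner_c \<eta> \<alpha>1 * v j)" for \<eta>
    unfolding partial_inner_def lift_def inner_c_def
    by (simp add: distrib_left sum.distrib sum_distrib_left mult_ac)
  thus "partial_inner \<alpha>0 (lift u v) = u" "partial_inner \<alpha>1 (lift u v) = v"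
    by (simp_all add: orthonormal inner_alpha1_alpha0)
qed

lemma rho_column_decomposition:
  "\<rho> (i, j) c = \<alpha>0 i * partial_inner \<alpha>0 (\<lambda>u. \<rho> u c) j + \<alpha>1 i * partial_inner \<alpha>1 (\<lambda>u. \<rho> u c) j"
proof -
  have "mat_apply \<rho> (unit_vec c) \<in> span2_tensor \<alpha>0 \<alpha>1" using support unfolding range_c_def by blast
  then obtain u v where uv: "(\<lambda>w. \<rho> w c) = lift u v"
    unfolding mat_apply_unit_vec span2_tensor_def lift_def by blast
  show ?thesis unfolding uv partial_inner_lift using fun_cong[OF uv, of "(i, j)"] by (simp add: lift_def)
qed

lemma rho_entry_decomposition:
  "\<rho> (i, j) (i', j') =
    \<alpha>0 i * cnj (\<alpha>0 i') * A j j' + \<alpha>0 i * cnj (\<alpha>1 i') * B j j' +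
    \<alpha>1 i * cnj (\<alpha>0 i') * partial_braket \<alpha>1 \<rho> \<alpha>0 j j' + \<alpha>1 i * cnj (\<alpha>1 i') * C j j'"
proof -
  \<comment> \<open>decompose the columns, then, by hermiticity, the rows\<close>
  have row: "\<rho> (k, j) (i', j') = cnj (\<alpha>0 i') * (\<Sum>k'\<in>UNIV. \<rho> (k, j) (k', j') * \<alpha>0 k')
      + cnj (\<alpha>1 i') * (\<Sum>k'\<in>UNIV. \<rho> (k, j) (k', j') * \<alpha>1 k')" for k
  proof -
    have "\<rho> (k, j) (i', j') = cnj (\<rho> (i', j') (k, j))" by (rule psd_hermitian[OF rho_psd])
    also have "\<dots> = cnj (\<alpha>0 i') * (\<Sum>k'\<in>UNIV. \<alpha>0 k' * cnj (\<rho> (k', j') (k, j)))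
        + cnj (\<alpha>1 i') * (\<Sum>k'\<in>UNIV. \<alpha>1 k' * cnj (\<rho> (k', j') (k, j)))"
      by (subst rho_column_decomposition) (simp add: partial_inner_def cnj_sum)
    also have "\<dots> = cnj (\<alpha>0 i') * (\<Sum>k'\<in>UNIV. \<rho> (k, j) (k', j') * \<alpha>0 k')
        + cnj (\<alpha>1 i') * (\<Sum>k'\<in>UNIV. \<rho> (k, j) (k', j') * \<alpha>1 k')"
      by (simp add: psd_hermitian[OF rho_psd, of "(k, j)"] mult.commute)
    finally show ?thesis .
  qed
  have "partial_inner \<eta> (\<lambda>u. \<rho> u (i', j')) j =
      cnj (\<alpha>0 i') * partial_braket \<eta> \<rho> \<alpha>0 j j' + cnj (\<alpha>1 i') * partial_braket \<eta> \<rho> \<alpha>1 j j'" for \<eta>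
    unfolding partial_inner_def row partial_braket_def
    by (simp add: distrib_left sum.distrib sum_distrib_left mult_ac)
  thus ?thesis by (subst rho_column_decomposition) (simp only: algebra_simps)
qed

lemma partial_braket_alpha1_alpha0: "partial_braket \<alpha>1 \<rho> \<alpha>0 = adjoint B"
  unfolding partial_braket_def adjoint_def cnj_sum
  by (intro ext, subst sum.swap, intro sum.cong refl, subst psd_hermitian[OF rho_psd]) (simp add: mult_ac)

lemma rho_block_decomposition:
  "\<rho> = (\<lambda>u w. kron (ketbra \<alpha>0 \<alpha>0) A u w + kron (ketbra \<alpha>0 \<alpha>1) B u w
    + kron (ketbra \<alpha>1 \<alpha>0) (adjoint B) u w + kron (ketbra \<alpha>1 \<alpha>1) C u w)"
  unfolding kron_def ketbra_def partial_braket_alpha1_alpha0[symmetric]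
  by (intro ext) (auto simp: rho_entry_decomposition)

lemma partial_transpose_block_decomposition:
  "partial_transpose_Y \<rho> = (\<lambda>u w. kron (ketbra \<alpha>0 \<alpha>0) (transpose_c A) u w
    + kron (ketbra \<alpha>0 \<alpha>1) (transpose_c B) u w
    + kron (ketbra \<alpha>1 \<alpha>0) (transpose_c (adjoint B)) u w + kron (ketbra \<alpha>1 \<alpha>1) (transpose_c C) u w)"
  unfolding kron_def ketbra_def transpose_c_def partial_transpose_Y_def partial_braket_alpha1_alpha0[symmetric]
  by (intro ext) (auto simp: rho_entry_decomposition)

lemma sesq_rho:
  "sesq \<rho> x y = sesq A (partial_inner \<alpha>0 x) (partial_inner \<alpha>0 y)
    + sesq B (partial_inner \<alpha>0 x) (partial_inner \<alpha>1 y)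
    + cnj (sesq B (partial_inner \<alpha>0 y) (partial_inner \<alpha>1 x))
    + sesq C (partial_inner \<alpha>1 x) (partial_inner \<alpha>1 y)"
  by (subst rho_block_decomposition)
    (simp only: sesq_add_mat[where c = 1, simplified] sesq_kron_ketbra sesq_adjoint)

lemma sesq_rho_lift:
  "sesq \<rho> (lift y z) (lift y z) = sesq A y y + sesq B y z + cnj (sesq B y z) + sesq C z z"
  unfolding sesq_rho partial_inner_lift ..

lemma sesq_partial_transpose_rho:
  fixes x :: "('x \<times> 'y) cvec"
  defines "y \<equiv> cvec_cnj (partial_inner \<alpha>0 x)" and "z \<equiv> cvec_cnj (partial_inner \<alpha>1 x)"
  shows "sesq (partial_transpose_Y \<rho>) x x = sesq A y y + sesq B z y + cnj (sesq B z y) + sesq C z z"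
  unfolding y_def z_def
  by (subst partial_transpose_block_decomposition)
    (simp only: sesq_add_mat[where c = 1, simplified] sesq_kron_ketbra sesq_transpose sesq_adjoint)

lemma phi_nonzero: "\<phi> \<noteq> (\<lambda>_. 0)"
  using unit_phi by (auto simp: inner_c_def)

lemma A_eq_ketbra: "A = (\<lambda>j j'. of_real a * ketbra \<phi> \<phi> j j')"
  unfolding A_rank1 ketbra_def by (simp add: mult.assoc)

lemma sesq_A: "sesq A u v = of_real a * cnj (inner_c \<phi> u) * inner_c \<phi> v"
  unfolding A_eq_ketbra sesq_scale_mat sesq_ketbra by (simp add: mult.assoc)

lemma psd_C: "psd C"
  by (rule psd_partial_braket[OF rho_psd])

lemma sesq_B_orthogonal:
  assumes "inner_c \<phi> u = 0" shows "sesq B u v = 0"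
proof (rule ccontr)
  define z where "z = sesq B u v"
  assume "sesq B u v \<noteq> 0"
  hence z: "0 < (cmod z)\<^sup>2" unfolding z_def by simp
  \<comment> \<open>along \<open>lift (t u) v\<close> the form of \<open>\<rho>\<close> is affine in \<open>t\<close>, so it cannot stay nonnegative\<close>
  define s where "s = (\<bar>Re (sesq C v v)\<bar> + 1) / (2 * (cmod z)\<^sup>2)"
  define y where "y = (\<lambda>i. - (of_real s * z) * u i)"
  have "sesq A y y = 0"
    unfolding sesq_A y_def inner_c_scale_right assms by simp
  moreover have "sesq B y v = - of_real (s * (cmod z)\<^sup>2)"
    unfolding y_def sesq_scale_left z_def[symmetric]
    by (simp add: mult_ac) (metis complex_norm_square of_real_power)
  ultimately have "sesq \<rho> (lift y v) (lift y v) = - of_real (2 * s * (cmod z)\<^sup>2) + sesq C v v"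
    unfolding sesq_rho_lift by simp
  moreover have "2 * s * (cmod z)\<^sup>2 = \<bar>Re (sesq C v v)\<bar> + 1"
    unfolding s_def using z by simp
  ultimately have "Re (sesq \<rho> (lift y v) (lift y v)) = - (\<bar>Re (sesq C v v)\<bar> + 1) + Re (sesq C v v)"
    by simp
  thus False using psd_sesqD[OF rho_psd, of "lift y v"] by linarith
qed

definition \<beta> :: "'y cvec" where
  "\<beta> = mat_apply (adjoint B) \<phi>"

lemma B_eq_ketbra: "B = ketbra \<phi> \<beta>"
proof (intro ext)
  fix j j'
  define u where "u = (\<lambda>i. unit_vec j i + (- cnj (\<phi> j)) * \<phi> i)"
  have "inner_c \<phi> u = 0"
    unfolding u_def inner_c_add_right unit_phi inner_c_unit_vec_right by simp
  hence "sesq B u (unit_vec j') = 0" by (rule sesq_B_orthogonal)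
  moreover have "sesq B \<phi> (unit_vec j') = cnj (\<beta> j')"
    unfolding sesq_unit_vec_right \<beta>_def mat_apply_def adjoint_def inner_c_def
    by (simp add: cnj_sum mult.commute)
  ultimately show "B j j' = ketbra \<phi> \<beta> j j'"
    unfolding u_def sesq_add_left sesq_unit_vec ketbra_def by simp
qed

lemma sesq_B: "sesq B u v = cnj (inner_c \<phi> u) * inner_c \<beta> v"
  unfolding B_eq_ketbra sesq_ketbra ..

definition \<gamma> :: complex where
  "\<gamma> = inner_c \<phi> \<beta>"

text \<open>Condition (iii) of the theorem says exactly that \<open>\<omega> \<noteq> 0\<close>.\<close>

definition \<omega> :: "'y cvec" where
  "\<omega> = (\<lambda>j. \<beta> j - \<gamma> * \<phi> j)"

lemma beta_decomposition: "\<beta> = (\<lambda>j. \<omega> j + \<gamma> * \<phi> j)"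
  unfolding \<omega>_def by simp

lemma beta_if_omega_zero: "\<omega> = (\<lambda>_. 0) \<Longrightarrow> \<beta> = (\<lambda>j. \<gamma> * \<phi> j)"
  unfolding beta_decomposition by simp

lemma inner_phi_omega: "inner_c \<phi> \<omega> = 0"
  using inner_c_add_right[of \<phi> \<beta> "- \<gamma>" \<phi>] unit_phi unfolding \<omega>_def \<gamma>_def by simp

lemma inner_beta_omega: "inner_c \<beta> \<omega> = of_real (sqnorm \<omega>)"
  unfolding beta_decomposition inner_c_add_left inner_phi_omega inner_c_self by simp

lemma orth_proj_range_A: "orth_proj (range_c A) = ketbra \<phi> \<phi>"
proof (rule orth_proj_eq)
  have "is_orth_proj (ketbra \<phi> \<phi>)" by (rule is_orth_proj_ketbra_unit[OF unit_phi])
  moreover have "range_c A = range_c (ketbra \<phi> \<phi>)"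
    unfolding A_eq_ketbra using a_pos by (simp add: range_c_scale)
  ultimately show "is_orth_proj_onto (ketbra \<phi> \<phi>) (range_c A)"
    unfolding is_orth_proj_onto_def is_orth_proj_def by simp
qed

lemma orth_proj_ker_A: "orth_proj (ker_c A) = (\<lambda>i k. id_mat i k - ketbra \<phi> \<phi> i k)"
proof (rule orth_proj_eq)
  have P: "is_orth_proj (ketbra \<phi> \<phi>)" by (rule is_orth_proj_ketbra_unit[OF unit_phi])
  moreover have "ker_c A = ker_c (ketbra \<phi> \<phi>)"
    unfolding A_eq_ketbra using a_pos by (simp add: ker_c_scale)
  ultimately show "is_orth_proj_onto (\<lambda>i k. id_mat i k - ketbra \<phi> \<phi> i k) (ker_c A)"
    using is_orth_proj_complement[OF P] range_c_complement[of "ketbra \<phi> \<phi>"]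
    unfolding is_orth_proj_onto_def is_orth_proj_def by simp
qed

lemma corner_product_eq:
  "mmult (mmult (orth_proj (range_c A)) B) (orth_proj (ker_c A)) = ketbra \<phi> \<omega>"
proof -
  have PB: "mmult (ketbra \<phi> \<phi>) B = B"
    unfolding B_eq_ketbra mmult_ketbra unit_phi by simp
  have BP: "mmult B (ketbra \<phi> \<phi>) = (\<lambda>i j. cnj \<gamma> * ketbra \<phi> \<phi> i j)"
    unfolding B_eq_ketbra mmult_ketbra \<gamma>_def inner_c_commute[of \<beta>] ..
  show ?thesis
    unfolding orth_proj_range_A orth_proj_ker_A PB mmult_id_minus BP
    unfolding B_eq_ketbra ketbra_def \<omega>_def by (simp add: fun_eq_iff algebra_simps)
qed

lemma NPT_if_omega_nonzero:
  assumes "\<omega> \<noteq> (\<lambda>_. 0)" shows "NPT \<rho>"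
proof -
  have N: "0 < sqnorm \<omega>" by (rule sqnorm_pos[OF assms])
  define s where "s = (\<bar>Re (sesq C \<phi> \<phi>)\<bar> + 1) / (2 * sqnorm \<omega>)"
  define y where "y = (\<lambda>j. - of_real s * \<omega> j)"
  define x where "x = lift (cvec_cnj y) (cvec_cnj \<phi>)"
  have "cvec_cnj (partial_inner \<alpha>0 x) = y" "cvec_cnj (partial_inner \<alpha>1 x) = \<phi>"
    unfolding x_def partial_inner_lift cvec_cnj_def by simp_all
  hence "sesq (partial_transpose_Y \<rho>) x x = sesq A y y + sesq B \<phi> y + cnj (sesq B \<phi> y) + sesq C \<phi> \<phi>"
    using sesq_partial_transpose_rho[of x] by simp
  also have "sesq A y y = 0"
    unfolding sesq_A y_def inner_c_scale_right inner_phi_omega by simp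
  also have "sesq B \<phi> y = - of_real (s * sqnorm \<omega>)"
    unfolding sesq_B unit_phi y_def inner_c_scale_right inner_beta_omega by simp
  finally have "Re (sesq (partial_transpose_Y \<rho>) x x) = - 2 * s * sqnorm \<omega> + Re (sesq C \<phi> \<phi>)"
    by simp
  also have "\<dots> = - (\<bar>Re (sesq C \<phi> \<phi>)\<bar> + 1) + Re (sesq C \<phi> \<phi>)"
    unfolding s_def using N by simp
  finally have "Re (sesq (partial_transpose_Y \<rho>) x x) < 0" by simp
  thus ?thesis unfolding NPT_def using psd_sesqD[of "partial_transpose_Y \<rho>" x] by auto
qed

text \<open>A Schur-complement bound: positivity of \<open>\<rho>\<close> along \<open>lift (t \<phi>) z\<close>, optimised over \<open>t\<close>.\<close>

lemma sesq_C_lower_bound: "(cmod (inner_c \<beta> z))\<^sup>2 / a \<le> Re (sesq C z z)"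
proof -
  define r where "r = inner_c \<beta> z"
  define y where "y = (\<lambda>j. - (r / of_real a) * \<phi> j)"
  have y: "inner_c \<phi> y = - (r / of_real a)"
    unfolding y_def inner_c_scale_right unit_phi by simp
  have "sesq A y y = of_real ((cmod r)\<^sup>2 / a)" "sesq B y z = - of_real ((cmod r)\<^sup>2 / a)"
    unfolding sesq_A sesq_B y r_def[symmetric] of_real_divide cnj_mult_self[symmetric]
    using a_pos by (simp_all add: field_simps)
  hence "sesq \<rho> (lift y z) (lift y z) = - of_real ((cmod r)\<^sup>2 / a) + sesq C z z"
    unfolding sesq_rho_lift by simp
  thus ?thesis using psd_sesqD[OF rho_psd, of "lift y z"] unfolding r_def by simp
qed

lemma not_NPT_if_omega_zero:
  assumes "\<omega> = (\<lambda>_. 0)" shows "\<not> NPT \<rho>"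
proof -
  note \<beta> = beta_if_omega_zero[OF assms]
  have "Im (sesq (partial_transpose_Y \<rho>) x x) = 0 \<and> 0 \<le> Re (sesq (partial_transpose_Y \<rho>) x x)" for x
  proof -
    define y where "y = cvec_cnj (partial_inner \<alpha>0 x)"
    define z where "z = cvec_cnj (partial_inner \<alpha>1 x)"
    define w where "w = cnj (inner_c \<phi> z) * (cnj \<gamma> * inner_c \<phi> y)"
    define X where "X = cmod (inner_c \<phi> y)"
    define Y where "Y = cmod \<gamma> * cmod (inner_c \<phi> z)"
    have PT: "sesq (partial_transpose_Y \<rho>) x x = of_real (a * X\<^sup>2) + w + cnj w + sesq C z z"
      unfolding sesq_partial_transpose_rho y_def[symmetric] z_def[symmetric] sesq_A sesq_B \<beta>
        inner_c_scale_left mult.assoc cnj_mult_self w_def[symmetric] X_def[symmetric]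
      by simp
    have "Y\<^sup>2 / a \<le> Re (sesq C z z)"
      using sesq_C_lower_bound[of z] unfolding \<beta> inner_c_scale_left Y_def
      by (simp add: norm_mult power_mult_distrib)
    moreover have "- (X * Y) \<le> Re w"
      using abs_Re_le_cmod[of w] unfolding w_def X_def Y_def by (simp add: norm_mult mult_ac)
    moreover have "0 \<le> a * X\<^sup>2 - 2 * X * Y + Y\<^sup>2 / a"
    proof -
      have "a * X\<^sup>2 - 2 * X * Y + Y\<^sup>2 / a = (a * X - Y)\<^sup>2 / a"
        using a_pos by (simp add: field_simps power2_eq_square)
      thus ?thesis using a_pos by simp
    qed
    ultimately show ?thesis using psd_sesqD[OF psd_C, of z] unfolding PT by simp
  qed
  thus ?thesis unfolding NPT_def by (simp add: psd_sesqI)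
qed

lemma trace_C: "trace_c C = 1 - of_real a"
proof -
  have trace_add: "trace_c (\<lambda>u w. M u w + N u w) = trace_c M + trace_c N" for M N :: "('x \<times> 'y) cmat"
    unfolding trace_c_def by (simp add: sum.distrib)
  have "trace_c A = of_real a"
    unfolding A_eq_ketbra trace_c_def ketbra_def using unit_phi
    by (simp add: sum_distrib_left[symmetric] inner_c_def mult.commute)
  moreover have "trace_c \<rho> = 1" using state by (simp add: density_op_def)
  ultimately show ?thesis
    using arg_cong[OF rho_block_decomposition, of trace_c]
    unfolding trace_add trace_kron_ketbra orthonormal inner_alpha1_alpha0 by (simp add: algebra_simps)
qed

definition \<xi> :: "'x cvec" where
  "\<xi> = (\<lambda>i. \<alpha>0 i + (\<gamma> / of_real a) * \<alpha>1 i)"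

definition C_reduced :: "'y cmat" where
  "C_reduced = (\<lambda>j j'. C j j' - of_real ((cmod \<gamma>)\<^sup>2 / a) * ketbra \<phi> \<phi> j j')"

lemma inner_xi: "inner_c \<xi> \<xi> = of_real (1 + (cmod \<gamma>)\<^sup>2 / a\<^sup>2)"
  unfolding \<xi>_def inner_c_add_left inner_c_add_right orthonormal inner_alpha1_alpha0
  using a_pos by (simp add: cnj_mult_self norm_divide power_divide power2_eq_square)

lemma xi_nonzero: "\<xi> \<noteq> (\<lambda>_. 0)"
proof
  assume "\<xi> = (\<lambda>_. 0)"
  moreover have "inner_c \<alpha>0 \<xi> = 1"
    unfolding \<xi>_def inner_c_add_right orthonormal by simp
  ultimately show False by (simp add: inner_c_def)
qed

lemma psd_C_reduced:
  assumes "\<omega> = (\<lambda>_. 0)" shows "psd C_reduced"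
proof (rule psd_sesqI)
  fix z
  have "sesq C_reduced z z = sesq C z z - of_real ((cmod \<gamma>)\<^sup>2 / a * (cmod (inner_c \<phi> z))\<^sup>2)"
    unfolding C_reduced_def sesq_diff_mat sesq_ketbra cnj_mult_self by simp
  moreover have "(cmod \<gamma>)\<^sup>2 / a * (cmod (inner_c \<phi> z))\<^sup>2 \<le> Re (sesq C z z)"
    using sesq_C_lower_bound[of z] unfolding beta_if_omega_zero[OF assms] inner_c_scale_left
    by (simp add: norm_mult power_mult_distrib)
  ultimately show "Im (sesq C_reduced z z) = 0 \<and> 0 \<le> Re (sesq C_reduced z z)"
    using psd_sesqD[OF psd_C, of z] by simp
qed

lemma rho_entry_if_omega_zero:
  assumes "\<omega> = (\<lambda>_. 0)"
  shows "\<rho> (i, j) (i', j') =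
    of_real a * ketbra \<xi> \<xi> i i' * ketbra \<phi> \<phi> j j' + ketbra \<alpha>1 \<alpha>1 i i' * C_reduced j j'"
proof -
  have B: "B j j' = cnj \<gamma> * ketbra \<phi> \<phi> j j'" for j j'
    unfolding B_eq_ketbra beta_if_omega_zero[OF assms] ketbra_def by simp
  have "of_real ((cmod \<gamma>)\<^sup>2) = \<gamma> * cnj \<gamma>" by (rule complex_norm_square)
  thus ?thesis
    unfolding rho_entry_decomposition partial_braket_alpha1_alpha0 adjoint_def B A_eq_ketbra C_reduced_def \<xi>_def
    unfolding ketbra_def using a_pos by (simp add: field_simps power2_eq_square)
qed

lemma separable_if_omega_zero:
  assumes "\<omega> = (\<lambda>_. 0)" shows "separable \<rho>"
proof -
  define k where "k = (cmod \<gamma>)\<^sup>2 / a"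
  obtain T t where T: "density_op T" "0 \<le> t" "trace_c C_reduced = of_real t"
      "\<And>j j'. C_reduced j j' = of_real t * T j j'"
    using psd_eq_scaled_density_op[OF psd_C_reduced[OF assms]] by blast
  have k: "0 \<le> k" unfolding k_def using a_pos by simp
  have "trace_c C_reduced = 1 - of_real a - of_real k"
    unfolding C_reduced_def trace_c_diff trace_c_ketbra unit_phi trace_C k_def by simp
  hence t: "t = 1 - a - k" using T(3) by (simp add: complex_eq_iff)
  have ray_\<xi>: "ray_proj \<xi> i i' = ketbra \<xi> \<xi> i i' / of_real (1 + k / a)" for i i'
    unfolding ray_proj_def inner_xi k_def by (simp add: power2_eq_square)
  define q where "q = (\<lambda>n::nat. if n = 0 then a + k else t)"
  define S where "S = (\<lambda>n::nat. if n = 0 then ray_proj \<xi> else ketbra \<alpha>1 \<alpha>1)"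
  define R where "R = (\<lambda>n::nat. if n = 0 then ketbra \<phi> \<phi> else T)"
  show ?thesis unfolding separable_def
  proof (intro exI conjI)
    show "\<forall>n<2. 0 \<le> q n \<and> density_op (S n) \<and> density_op (R n)"
      unfolding q_def S_def R_def
      using a_pos k T(1,2) density_op_ray_proj[OF xi_nonzero] density_op_ketbra_unit[OF orthonormal(2)]
        density_op_ketbra_unit[OF unit_phi] by (auto simp: less_2_cases_iff)
    show "(\<Sum>n<2. q n) = 1" unfolding q_def t by (simp add: numeral_2_eq_2)
    show "\<rho> = (\<lambda>u w. \<Sum>n<2. complex_of_real (q n) * kron (S n) (R n) u w)"
    proof (intro ext, clarify)
      fix i j i' j'
      have "(a + k) / (1 + k / a) = a" using a_pos k by (simp add: field_simps)
      hence "complex_of_real (a + k) / of_real (1 + k / a) = of_real a" by (metis of_real_divide)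
      thus "\<rho> (i, j) (i', j') = (\<Sum>n<2. complex_of_real (q n) * kron (S n) (R n) (i, j) (i', j'))"
        unfolding rho_entry_if_omega_zero[OF assms] T(4) q_def S_def R_def kron_def ray_\<xi>
        by (simp add: numeral_2_eq_2 mult_ac) (metis times_divide_eq_left)
    qed
  qed
qed

definition \<psi> :: "real \<Rightarrow> 'x cvec" where
  "\<psi> e = (\<lambda>i. \<alpha>0 i + of_real e * \<alpha>1 i)"

definition test_meas :: "real \<Rightarrow> 'x cmat list" where
  "test_meas e = [ray_proj (\<psi> e), (\<lambda>i k. id_mat i k - ray_proj (\<psi> e) i k)]"

lemma inner_psi: "inner_c (\<psi> e) (\<psi> e) = of_real (1 + e\<^sup>2)"
  unfolding \<psi>_def inner_c_add_left inner_c_add_right orthonormal inner_alpha1_alpha0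
  by (simp add: power2_eq_square)

lemma proj_meas_test_meas: "proj_meas (test_meas e)"
proof -
  have "\<psi> e \<noteq> (\<lambda>_. 0)"
  proof
    assume "\<psi> e = (\<lambda>_. 0)"
    hence "of_real (1 + e\<^sup>2) = (0::complex)" using inner_psi[of e] by (simp add: inner_c_def)
    thus False by (simp only: of_real_eq_0_iff) (smt (verit) zero_le_power2)
  qed
  thus ?thesis
    unfolding test_meas_def by (intro proj_meas_complement_pair is_orth_proj_ray_proj)
qed

lemma sesq_assemblage_test:
  "sesq (assemblage \<rho> (test_meas e ! 0)) x y = (sesq A x y + of_real e * sesq B x y
    + of_real e * cnj (sesq B y x) + of_real (e\<^sup>2) * sesq C x y) / of_real (1 + e\<^sup>2)"
proof -
  have "(\<lambda>(i, j). \<psi> e i * x j) = lift x (\<lambda>j. of_real e * x j)" for x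
    unfolding \<psi>_def lift_def by (auto simp: fun_eq_iff algebra_simps)
  hence "sesq (assemblage \<rho> (test_meas e ! 0)) x y =
      sesq \<rho> (lift x (\<lambda>j. of_real e * x j)) (lift y (\<lambda>j. of_real e * y j)) / of_real (1 + e\<^sup>2)"
    unfolding test_meas_def nth_Cons_0 assemblage_ray_proj sesq_divide_mat sesq_partial_braket inner_psi
    by simp
  thus ?thesis
    unfolding sesq_rho partial_inner_lift sesq_scale_left sesq_scale_right
    by (simp add: power2_eq_square mult_ac)
qed

lemma sesq_assemblage_test_phi_omega:
  "sesq (assemblage \<rho> (test_meas e ! 0)) \<phi> \<omega> =
    (of_real (e * sqnorm \<omega>) + of_real (e\<^sup>2) * sesq C \<phi> \<omega>) / of_real (1 + e\<^sup>2)"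
  unfolding sesq_assemblage_test sesq_A sesq_B inner_phi_omega inner_beta_omega unit_phi by simp

lemma sesq_assemblage_test_omega:
  "sesq (assemblage \<rho> (test_meas e ! 0)) \<omega> \<omega> = of_real (e\<^sup>2) * sesq C \<omega> \<omega> / of_real (1 + e\<^sup>2)"
  unfolding sesq_assemblage_test sesq_A sesq_B inner_phi_omega by simp

lemma sesq_assemblage_test_phi_omega_lower:
  assumes "0 < e" "e \<le> 1" "e * cmod (sesq C \<phi> \<omega>) \<le> sqnorm \<omega> / 2"
  shows "e * sqnorm \<omega> / 4 \<le> cmod (sesq (assemblage \<rho> (test_meas e ! 0)) \<phi> \<omega>)"
proof -
  have "e * sqnorm \<omega> - e\<^sup>2 * cmod (sesq C \<phi> \<omega>) \<le> cmod (of_real (e * sqnorm \<omega>) + of_real (e\<^sup>2) * sesq C \<phi> \<omega>)"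
    using norm_diff_ineq[of "of_real (e * sqnorm \<omega>) :: complex" "of_real (e\<^sup>2) * sesq C \<phi> \<omega>"]
      assms(1) sqnorm_nonneg[of \<omega>] by (simp add: norm_mult norm_power)
  moreover have "e\<^sup>2 * cmod (sesq C \<phi> \<omega>) \<le> e * (sqnorm \<omega> / 2)"
    using assms(1,3) by (simp add: power2_eq_square mult.assoc mult_left_mono)
  moreover have "1 + e\<^sup>2 \<le> 2" using assms(1,2) by (simp add: power_le_one)
  moreover have "e * sqnorm \<omega> / 4 * (1 + e\<^sup>2) \<le> e * sqnorm \<omega> / 4 * 2"
    using calculation(3) assms(1) sqnorm_nonneg[of \<omega>] by (intro mult_left_mono) auto
  ultimately have "e * sqnorm \<omega> / 4 * (1 + e\<^sup>2) \<le> cmod (of_real (e * sqnorm \<omega>) + of_real (e\<^sup>2) * sesq C \<phi> \<omega>)"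
    by linarith
  thus ?thesis
    unfolding sesq_assemblage_test_phi_omega norm_divide norm_of_real
    by (simp add: le_divide_eq add_pos_nonneg)
qed

lemma lhs_test_sqrt_moment_lower:
  assumes "lhs_model \<mu> \<tau> p \<rho>" "0 < e" "e \<le> 1" "e * cmod (sesq C \<phi> \<omega>) \<le> sqnorm \<omega> / 2"
  shows "e * sqnorm \<omega> / 4 \<le>
    (\<Sum>j\<in>UNIV. cmod (\<phi> j)) * integral\<^sup>L \<mu> (\<lambda>l. p (test_meas e) 0 l * sqrt (Re (sesq (\<tau> l) \<omega> \<omega>)))"
proof -
  have "e * sqnorm \<omega> / 4 \<le> cmod (sesq (assemblage \<rho> (test_meas e ! 0)) \<phi> \<omega>)"
    by (rule sesq_assemblage_test_phi_omega_lower[OF assms(2-)])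
  also have "\<dots> \<le> (\<Sum>j\<in>UNIV. cmod (\<phi> j)) *
      integral\<^sup>L \<mu> (\<lambda>l. p (test_meas e) 0 l * sqrt (Re (sesq (\<tau> l) \<omega> \<omega>)))"
    by (rule lhs_sesq_le_integral_sqrt[OF assms(1) proj_meas_test_meas]) (simp add: test_meas_def)
  finally show ?thesis .
qed

lemma lhs_test_moment_upper:
  assumes "lhs_model \<mu> \<tau> p \<rho>"
  shows "integral\<^sup>L \<mu> (\<lambda>l. p (test_meas e) 0 l * Re (sesq (\<tau> l) \<omega> \<omega>)) \<le> Re (sesq C \<omega> \<omega>) * e\<^sup>2"
proof -
  have "integral\<^sup>L \<mu> (\<lambda>l. p (test_meas e) 0 l * Re (sesq (\<tau> l) \<omega> \<omega>)) = e\<^sup>2 * Re (sesq C \<omega> \<omega>) / (1 + e\<^sup>2)"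
    using lhs_integral_Re_sesq(2)[OF assms proj_meas_test_meas, where a = 0 and y = \<omega>]
    by (simp add: test_meas_def sesq_assemblage_test_omega[unfolded test_meas_def, simplified]
        Re_divide_of_real)
  also have "\<dots> \<le> e\<^sup>2 * Re (sesq C \<omega> \<omega>) / 1"
    using psd_sesqD[OF psd_C, of \<omega>] by (intro divide_left_mono) (auto simp: add_pos_nonneg)
  finally show ?thesis by (simp add: mult.commute)
qed

lemma no_lhs_model_if_omega_nonzero:
  assumes "\<omega> \<noteq> (\<lambda>_. 0)" shows "\<not> lhs_model \<mu> \<tau> p \<rho>"
proof
  assume lhs: "lhs_model \<mu> \<tau> p \<rho>"
  note L = lhs_modelD[OF lhs proj_meas_test_meas, of 0, simplified test_meas_def, simplified]
  define S where "S = (\<Sum>j\<in>UNIV. cmod (\<phi> j))"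
  define e0 where "e0 = min 1 (sqnorm \<omega> / (2 * (cmod (sesq C \<phi> \<omega>) + 1)))"
  have N: "0 < sqnorm \<omega>" by (rule sqnorm_pos[OF assms])
  have "0 < S"
  proof -
    obtain j where "\<phi> j \<noteq> 0" using phi_nonzero by auto
    hence "0 < cmod (\<phi> j)" by simp
    also have "\<dots> \<le> S" unfolding S_def by (rule member_le_sum) auto
    finally show ?thesis .
  qed
  have "0 < 2 * (cmod (sesq C \<phi> \<omega>) + 1)" by (smt (verit) norm_ge_zero)
  hence e0: "0 < e0" unfolding e0_def using divide_pos_pos[OF N] by simp
  have small: "e * cmod (sesq C \<phi> \<omega>) \<le> sqnorm \<omega> / 2" if "0 < e" "e \<le> e0" for e
  proof -
    have "e * cmod (sesq C \<phi> \<omega>) \<le> sqnorm \<omega> / (2 * (cmod (sesq C \<phi> \<omega>) + 1)) * cmod (sesq C \<phi> \<omega>)"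
      using that unfolding e0_def by (intro mult_right_mono) auto
    also have "\<dots> = sqnorm \<omega> / 2 * (cmod (sesq C \<phi> \<omega>) / (cmod (sesq C \<phi> \<omega>) + 1))" by simp
    also have "\<dots> \<le> sqnorm \<omega> / 2"
      using N by (intro mult_left_le) (simp_all add: divide_le_eq_1 add_nonneg_pos)
    finally show ?thesis .
  qed
  show False
  proof (rule no_linear_sqrt_moment_with_quadratic_moment[where
        f = "\<lambda>l. Re (sesq (\<tau> l) \<omega> \<omega>)" and q = "\<lambda>e. p (test_meas e) 0"
        and a = "sqnorm \<omega> / (4 * S)" and b = "Re (sesq C \<omega> \<omega>)" and \<delta> = e0])
    show "prob_space \<mu>" by (rule L(1))
    show "(\<lambda>l. Re (sesq (\<tau> l) \<omega> \<omega>)) \<in> borel_measurable \<mu>" by (rule lhs_sesq_measurable[OF lhs])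
    show "0 \<le> Re (sesq (\<tau> l) \<omega> \<omega>)" if "l \<in> space \<mu>" for l
      using L(2)[OF that] psd_sesqD unfolding density_op_def by blast
    show "0 \<le> p (test_meas e) 0 l \<and> p (test_meas e) 0 l \<le> 1" if "l \<in> space \<mu>" for e l
      using lhs_modelD(5)[OF lhs proj_meas_test_meas _ that] by (simp add: test_meas_def)
    show "integrable \<mu> (\<lambda>l. p (test_meas e) 0 l * sqrt (Re (sesq (\<tau> l) \<omega> \<omega>)))" for e
      using lhs_integrable_sqrt[OF lhs proj_meas_test_meas] by (simp add: test_meas_def)
    show "integrable \<mu> (\<lambda>l. p (test_meas e) 0 l * Re (sesq (\<tau> l) \<omega> \<omega>))" for e
      using lhs_integral_Re_sesq(1)[OF lhs proj_meas_test_meas] by (simp add: test_meas_def)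
    show "sqnorm \<omega> / (4 * S) * e \<le> integral\<^sup>L \<mu> (\<lambda>l. p (test_meas e) 0 l * sqrt (Re (sesq (\<tau> l) \<omega> \<omega>)))"
      if "0 < e" "e \<le> e0" for e
      using lhs_test_sqrt_moment_lower[OF lhs that(1) _ small[OF that]] that \<open>0 < S\<close>
      unfolding e0_def S_def[symmetric] by (simp add: field_simps)
    show "integral\<^sup>L \<mu> (\<lambda>l. p (test_meas e) 0 l * Re (sesq (\<tau> l) \<omega> \<omega>)) \<le> Re (sesq C \<omega> \<omega>) * e\<^sup>2"
      for e by (rule lhs_test_moment_upper[OF lhs])
    show "0 < sqnorm \<omega> / (4 * S)" using N \<open>0 < S\<close> by simp
    show "0 \<le> Re (sesq C \<omega> \<omega>)" using psd_sesqD[OF psd_C] by blast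
  qed (rule e0)
qed

end

theorem mainTheorem5:
  fixes \<rho> :: "(('x::finite) \<times> ('y::finite)) cmat"
    and \<alpha>0 \<alpha>1 :: "'x cvec" and \<phi> :: "'y cvec" and a :: real
  assumes orthonormal: "inner_c \<alpha>0 \<alpha>0 = 1" "inner_c \<alpha>1 \<alpha>1 = 1" "inner_c \<alpha>0 \<alpha>1 = 0"
    and state: "density_op \<rho>"
    and support: "range_c \<rho> \<subseteq> span2_tensor \<alpha>0 \<alpha>1"
    and unit_phi: "inner_c \<phi> \<phi> = 1"
    and a_pos: "a > 0"
    and A_rank1: "partial_braket \<alpha>0 \<rho> \<alpha>0 = (\<lambda>j j'. complex_of_real a * \<phi> j * cnj (\<phi> j'))"
  shows "(entangled \<rho> \<longleftrightarrow> NPT \<rho>) \<and>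
         (NPT \<rho> \<longleftrightarrow>
            mmult (mmult (orth_proj (range_c (partial_braket \<alpha>0 \<rho> \<alpha>0))) (partial_braket \<alpha>0 \<rho> \<alpha>1))
                  (orth_proj (ker_c (partial_braket \<alpha>0 \<rho> \<alpha>0))) \<noteq> (\<lambda>_ _. 0)) \<and>
         (NPT \<rho> \<longleftrightarrow> proj_steerable \<rho>)"
proof -
  interpret rank_one_corner \<rho> \<alpha>0 \<alpha>1 \<phi> a
    using assms by unfold_locales
  have NPT: "NPT \<rho> \<longleftrightarrow> \<omega> \<noteq> (\<lambda>_. 0)"
    using NPT_if_omega_nonzero not_NPT_if_omega_zero by blast
  have corner: "mmult (mmult (orth_proj (range_c A)) B) (orth_proj (ker_c A)) \<noteq> (\<lambda>_ _. 0) \<longleftrightarrow>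
      \<omega> \<noteq> (\<lambda>_. 0)"
    unfolding corner_product_eq ketbra_eq_zero_iff using phi_nonzero by simp
  have steerable: "proj_steerable \<rho> \<longleftrightarrow> \<omega> \<noteq> (\<lambda>_. 0)"
    unfolding proj_steerable_def
    using no_lhs_model_if_omega_nonzero separable_imp_lhs_model separable_if_omega_zero by blast
  have entangled: "entangled \<rho> \<longleftrightarrow> \<omega> \<noteq> (\<lambda>_. 0)"
    unfolding entangled_def
    using no_lhs_model_if_omega_nonzero separable_imp_lhs_model separable_if_omega_zero by blast
  show ?thesis using NPT corner steerable entangled by blast
qed

end
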